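(* (a) There is a multi-valued function $F: \mathcal{C} \Rightarrow \mathcal{N}$ such that $F(x)$ is closed in $\mathcal{N}$ for every $x \in \mathcal{C}$, the graph of $F$ is a Borel subset of $\mathcal{C}\times\mathcal{N}$, and the set of points of continuity of $F$ is analytic and not Borel. (b) There is a multi-valued function $F: [0,1] \Rightarrow [0,1]$ whose graph is a Borel subset of $[0,1]\times[0,1]$ and whose set of points of continuity is analytic and not Borel.
   Context: $\mathcal{N}=\omega^\omega$ is the Baire space with the product topology (of discrete $\omega$), metrized by $d(\alpha,\beta) = 1/(\min\{n: \alpha(n)\ne\beta(n)\}+1)$ for $\alpha\neq\beta$; $\mathcal{C}=2^\omega\subseteq\mathcal{N}$ is the Cantor space with the induced metric. A multi-valued function $F: X \Rightarrow Y$ assigns to each $x$ a nonempty set $F(x)\subseteq Y$; its graph is $\{(x,y): y\in F(x)\}$. $F$ is continuous at $x$ if there is some $y \in F(x)$ such that for every $\varepsilon>0$ there is $\delta>0$ such that for every $x' \in B_p(x,\delta)$ there is $y' \in F(x')$ with $d(y,y')<\varepsilon$. A subset of a complete separable metric space is analytic if it is a continuous image of a closed subset of a complete separable metric space. *)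

theory Defs
  imports "HOL-Analysis.Analysis"
begin

text \<open>Baire space: nat \<Rightarrow> nat with the product topology (library instance on function
  spaces, nat carrying its discrete topology). Cantor space: the 0-1 valued sequences.\<close>

definition cantor_space :: "(nat \<Rightarrow> nat) set" where
  "cantor_space = {\<alpha>. \<forall>n. \<alpha> n \<in> {0, 1}}"

definition baire_dist :: "(nat \<Rightarrow> nat) \<Rightarrow> (nat \<Rightarrow> nat) \<Rightarrow> real" where
  "baire_dist \<alpha> \<beta> = (if \<alpha> = \<beta> then 0 else 1 / (real (LEAST n. \<alpha> n \<noteq> \<beta> n) + 1))"

definition multifun_on :: "'a set \<Rightarrow> 'b set \<Rightarrow> ('a \<Rightarrow> 'b set) \<Rightarrow> bool" where
  "multifun_on D Y F \<longleftrightarrow> (\<forall>x\<in>D. F x \<noteq> {} \<and> F x \<subseteq> Y)"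

definition mgraph :: "'a set \<Rightarrow> ('a \<Rightarrow> 'b set) \<Rightarrow> ('a \<times> 'b) set" where
  "mgraph D F = {(x, y). x \<in> D \<and> y \<in> F x}"

definition mcontinuous_at ::
  "('a \<Rightarrow> 'a \<Rightarrow> real) \<Rightarrow> ('b \<Rightarrow> 'b \<Rightarrow> real) \<Rightarrow> 'a set \<Rightarrow> ('a \<Rightarrow> 'b set) \<Rightarrow> 'a \<Rightarrow> bool" where
  "mcontinuous_at dX dY D F x \<longleftrightarrow>
     (\<exists>y\<in>F x. \<forall>\<epsilon>>0. \<exists>\<delta>>0. \<forall>x'\<in>D. dX x x' < \<delta> \<longrightarrow> (\<exists>y'\<in>F x'. dY y y' < \<epsilon>))"

definition mcontinuity_points ::
  "('a \<Rightarrow> 'a \<Rightarrow> real) \<Rightarrow> ('b \<Rightarrow> 'b \<Rightarrow> real) \<Rightarrow> 'a set \<Rightarrow> ('a \<Rightarrow> 'b set) \<Rightarrow> 'a set" where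
  "mcontinuity_points dX dY D F = {x \<in> D. mcontinuous_at dX dY D F x}"

text \<open>Analytic set: continuous image of a closed subset of a Polish space. The Polish space
  is taken to be the Baire space.\<close>

definition analytic_set :: "'a::topological_space set \<Rightarrow> bool" where
  "analytic_set A \<longleftrightarrow>
     (\<exists>S :: (nat \<Rightarrow> nat) set. \<exists>f. closed S \<and> continuous_on S f \<and> f ` S = A)"

end

theory Submission
  imports Defs
begin

text \<open>
  (a) A point y of the Cantor space codes a tree on the natural numbers, and F y consists of the
  branches and the leaves of that tree. A branch can be
  followed into every nearby tree, while a leaf s is destroyed by the nearby tree that also
  contains some s @ [j]; hence F is continuous exactly at the ill-founded trees. These form an
  analytic set, the projection of the closed set of trees paired with a branch, and no Borel set:
  a Suslin-scheme diagonal set, which is not Borel since every Borel set and its complement are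
  given by Suslin schemes, reduces continuously to them.

  (b) Transport F to the image K of the Cantor space in [0,1] under the base-4 embedding with
  digits 0 and 2, embedding also the values injectively into K. Off K the values are taken from
  two disjoint families of points, chosen according to the rationality of r and both dense at the
  scale of the distance to K. This keeps the continuity points on K and adds none off K.
\<close>

section \<open>Cylinders and the Baire metric\<close>

definition cylinder :: "(nat \<Rightarrow> nat) \<Rightarrow> nat \<Rightarrow> (nat \<Rightarrow> nat) set" where
  "cylinder x N = {z. \<forall>i<N. z i = x i}"

lemma cylinder_self[simp]: "x \<in> cylinder x N" by (simp add: cylinder_def)

lemma open_cylinder: "open (cylinder x N)"
proof -
  have "open {f::nat\<Rightarrow>nat. \<forall>i\<in>{..<N}. f (id i) \<in> {x i}}"
    by (rule product_topology_basis') (auto intro: open_discrete)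
  moreover have "{f::nat\<Rightarrow>nat. \<forall>i\<in>{..<N}. f (id i) \<in> {x i}} = cylinder x N"
    by (auto simp: cylinder_def)
  ultimately show ?thesis by simp
qed

lemma open_contains_cylinder:
  assumes "open U" "x \<in> U"
  shows "\<exists>N. cylinder x N \<subseteq> U"
proof -
  have "openin (product_topology (\<lambda>i. euclidean) UNIV) U"
    using assms(1) by (simp add: open_fun_def)
  from product_topology_open_contains_basis[OF this assms(2)]
  obtain X where X: "x \<in> (\<Pi>\<^sub>E i\<in>UNIV. X i)" "finite {i. X i \<noteq> topspace (euclidean::nat topology)}"
     "(\<Pi>\<^sub>E i\<in>UNIV. X i) \<subseteq> U" by blast
  have fin: "finite {i. X i \<noteq> UNIV}" using X(2) by simp
  obtain N where "{i. X i \<noteq> UNIV} \<subseteq> {..<N}" using finite_nat_bounded[OF fin] by blast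
  then have N: "\<forall>i\<in>{i. X i \<noteq> UNIV}. i < N" by auto
  have "cylinder x N \<subseteq> (\<Pi>\<^sub>E i\<in>UNIV. X i)"
  proof
    fix z assume z: "z \<in> cylinder x N"
    show "z \<in> (\<Pi>\<^sub>E i\<in>UNIV. X i)"
    proof (simp add: PiE_iff, intro allI)
      fix i show "z i \<in> X i"
        using N z X(1) by (cases "X i = UNIV") (auto simp: cylinder_def PiE_iff)
    qed
  qed
  then show ?thesis using X(3) by blast
qed

lemma open_cylinderI:
  assumes "\<And>x. x \<in> U \<Longrightarrow> \<exists>N. cylinder x N \<subseteq> U"
  shows "open U"
  by (metis assms open_cylinder cylinder_self open_subopen)

lemma locally_constant_clopen:
  assumes "\<And>z. \<exists>N. \<forall>z'\<in>cylinder z N. (Q z' \<longleftrightarrow> Q z)"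
  shows "closed {z. Q z}" "open {z. Q z}"
proof -
  show "open {z. Q z}"
    by (rule open_cylinderI) (use assms in fastforce)
  have "open {z. \<not> Q z}"
    by (rule open_cylinderI) (use assms in fastforce)
  then show "closed {z. Q z}" by (simp add: closed_def Compl_eq)
qed

lemma closed_cylinderI:
  assumes "\<And>w. w \<notin> A \<Longrightarrow> \<exists>N. cylinder w N \<inter> A = {}"
  shows "closed A"
proof -
  have "open (- A)"
    by (rule open_cylinderI) (use assms in blast)
  then show ?thesis by (simp add: closed_def)
qed

lemma continuous_on_cylinderI:
  fixes f :: "(nat\<Rightarrow>nat) \<Rightarrow> 'b::topological_space"
  assumes "\<And>x V. x \<in> S \<Longrightarrow> open V \<Longrightarrow> f x \<in> V \<Longrightarrow> \<exists>N. \<forall>z\<in>S. z \<in> cylinder x N \<longrightarrow> f z \<in> V"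
  shows "continuous_on S f"
  unfolding continuous_on_topological
  by (metis assms open_cylinder cylinder_self)

lemma continuous_on_cylinder_metricI:
  fixes f :: "(nat\<Rightarrow>nat) \<Rightarrow> 'b::metric_space"
  assumes "\<And>x e. x \<in> S \<Longrightarrow> e > 0 \<Longrightarrow> \<exists>N. \<forall>z\<in>S. z \<in> cylinder x N \<longrightarrow> dist (f z) (f x) < e"
  shows "continuous_on S f"
proof (rule continuous_on_cylinderI)
  fix x V assume "x \<in> S" "open V" "f x \<in> V"
  then obtain e where "e > 0" "ball (f x) e \<subseteq> V" by (meson openE)
  with assms[OF \<open>x\<in>S\<close> \<open>e>0\<close>] show "\<exists>N. \<forall>z\<in>S. z \<in> cylinder x N \<longrightarrow> f z \<in> V"
    by (metis dist_commute mem_ball subsetD)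
qed

lemma continuous_on_locally_constant_coordinates:
  fixes g :: "(nat\<Rightarrow>nat) \<Rightarrow> nat \<Rightarrow> nat"
  assumes "\<And>x k. \<exists>N. \<forall>z\<in>cylinder x N. g z k = g x k"
  shows "continuous_on UNIV g"
proof (rule continuous_on_coordinatewise_then_product)
  fix k show "continuous_on UNIV (\<lambda>x. g x k)"
    by (rule continuous_on_cylinderI) (metis assms)
qed

lemma cylinder_mono: "z' \<in> cylinder z N \<Longrightarrow> M \<le> N \<Longrightarrow> z' \<in> cylinder z M"
  by (simp add: cylinder_def)

lemma baire_dist_le_if_agree:
  assumes "\<forall>i<N. a i = b i" shows "baire_dist a b \<le> 1 / (real N + 1)"
proof (cases "a = b")
  case True then show ?thesis by (simp add: baire_dist_def)
next
  case False
  then have ex: "\<exists>n. a n \<noteq> b n" by auto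
  define L where "L = (LEAST n. a n \<noteq> b n)"
  have "a L \<noteq> b L" unfolding L_def using ex by (rule LeastI_ex)
  then have "N \<le> L" using assms by (meson not_le)
  then have "1 / (real L + 1) \<le> 1 / (real N + 1)"
    by (intro divide_left_mono) auto
  then show ?thesis using False by (simp add: baire_dist_def L_def)
qed

lemma agree_if_baire_dist_less:
  assumes "baire_dist a b < 1 / (real N + 1)" "i \<le> N" shows "a i = b i"
proof (cases "a = b")
  case True then show ?thesis by simp
next
  case False
  define L where "L = (LEAST n. a n \<noteq> b n)"
  have "1 / (real L + 1) < 1 / (real N + 1)" using assms(1) False
    by (simp add: baire_dist_def L_def)
  have "N < L"
  proof (rule ccontr)
    assume "\<not> N < L"
    then have "1 / (real N + 1) \<le> 1 / (real L + 1)" by (intro divide_left_mono) auto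
    with \<open>1 / (real L + 1) < 1 / (real N + 1)\<close> show False by simp
  qed
  then have "i < L" using assms(2) by simp
  then show ?thesis unfolding L_def using not_less_Least by blast
qed

lemma baire_dist_less_if_agree:
  assumes "\<forall>i\<le>N. a i = b i" shows "baire_dist a b < 1 / (real N + 1)"
proof -
  have "baire_dist a b \<le> 1 / (real (Suc N) + 1)"
    using assms by (intro baire_dist_le_if_agree) (auto simp: less_Suc_eq_le)
  also have "\<dots> < 1 / (real N + 1)" by (simp add: divide_strict_left_mono)
  finally show ?thesis .
qed

lemma ex_inverse_Suc_less: "(e::real) > 0 \<Longrightarrow> \<exists>N. 1 / (real N + 1) < e"
  using reals_Archimedean[of e] by (auto simp: inverse_eq_divide add.commute)

section \<open>Suslin schemes\<close>

definition seq_prefix :: "(nat \<Rightarrow> nat) \<Rightarrow> nat \<Rightarrow> nat list" where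
  "seq_prefix x n = map x [0..<n]"

lemma length_seq_prefix[simp]: "length (seq_prefix x n) = n" by (simp add: seq_prefix_def)

lemma nth_seq_prefix[simp]: "i < n \<Longrightarrow> seq_prefix x n ! i = x i" by (simp add: seq_prefix_def)

lemma take_seq_prefix[simp]: "m \<le> n \<Longrightarrow> take m (seq_prefix x n) = seq_prefix x m"
  by (simp add: seq_prefix_def take_map)

lemma seq_prefix_eq_iff: "seq_prefix x n = seq_prefix y n \<longleftrightarrow> (\<forall>i<n. x i = y i)"
  by (auto simp: seq_prefix_def)

lemma seq_prefix_Suc_case:
  "seq_prefix (\<lambda>i. case i of 0 \<Rightarrow> k | Suc j \<Rightarrow> b j) (Suc n) = k # seq_prefix b n"
  by (simp add: seq_prefix_def map_upt_Suc del: upt_Suc)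

text \<open>Suslin sets in scheme form. They serve only to show that the diagonal set below is not
  Borel: Borel sets and their complements are Suslin, the complement of the diagonal is not.\<close>

definition suslin :: "(nat \<Rightarrow> nat) set \<Rightarrow> bool" where
  "suslin A \<longleftrightarrow> (\<exists>P. A = {x. \<exists>b. \<forall>n. P (seq_prefix x n) (seq_prefix b n)})"

lemma suslin_closed:
  assumes "closed A" shows "suslin A"
proof -
  let ?P = "\<lambda>xs (bs::nat list). \<exists>z\<in>A. seq_prefix z (length xs) = xs"
  have "A = {x. \<exists>b. \<forall>n. ?P (seq_prefix x n) (seq_prefix b n)}"
  proof (intro set_eqI iffI)
    fix x assume "x \<in> A" then show "x \<in> {x. \<exists>b. \<forall>n. ?P (seq_prefix x n) (seq_prefix b n)}" by auto
  next
    fix x assume x: "x \<in> {x. \<exists>b. \<forall>n. ?P (seq_prefix x n) (seq_prefix b n)}"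
    show "x \<in> A"
    proof (rule ccontr)
      assume "x \<notin> A"
      moreover have "open (- A)" using assms by (simp add: open_Compl)
      ultimately obtain N where N: "cylinder x N \<subseteq> - A"
        using open_contains_cylinder[of "- A" x] by blast
      from x obtain z where "z \<in> A" "seq_prefix z N = seq_prefix x N" by auto
      then have "z \<in> cylinder x N" by (auto simp: cylinder_def seq_prefix_eq_iff)
      with N \<open>z\<in>A\<close> show False by auto
    qed
  qed
  then show ?thesis unfolding suslin_def by (rule exI[of _ ?P])
qed

lemma suslin_open:
  assumes "open A" shows "suslin A"
proof -
  let ?P = "\<lambda>xs bs. bs = [] \<or> (let t = (from_nat (hd bs) :: nat list) in
      (\<forall>z. (\<forall>i<length t. z i = t ! i) \<longrightarrow> z \<in> A) \<and> (length t \<le> length xs \<longrightarrow> take (length t) xs = t))"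
    \<comment> \<open>the first entry of the witness codes a prefix of x whose cylinder lies inside A\<close>
  have "A = {x. \<exists>b. \<forall>n. ?P (seq_prefix x n) (seq_prefix b n)}"
  proof (intro set_eqI iffI)
    fix x assume "x \<in> A"
    then obtain N where N: "cylinder x N \<subseteq> A" using open_contains_cylinder assms by blast
    let ?b = "\<lambda>_::nat. to_nat (seq_prefix x N)"
    have "?P (seq_prefix x n) (seq_prefix ?b n)" for n
    proof (cases n)
      case 0 then show ?thesis by (simp add: seq_prefix_def)
    next
      case (Suc m)
      then have "hd (seq_prefix ?b n) = to_nat (seq_prefix x N)"
        by (simp add: seq_prefix_def del: upt_Suc add: upt_conv_Cons)
      have "\<forall>z. (\<forall>i<N. z i = seq_prefix x N ! i) \<longrightarrow> z \<in> A"
        using N by (auto simp: cylinder_def)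
      moreover have "N \<le> n \<longrightarrow> take N (seq_prefix x n) = seq_prefix x N" by simp
      ultimately show ?thesis unfolding Let_def \<open>hd (seq_prefix ?b n) = to_nat (seq_prefix x N)\<close>
        by (simp only: from_nat_to_nat length_seq_prefix) simp
    qed
    then show "x \<in> {x. \<exists>b. \<forall>n. ?P (seq_prefix x n) (seq_prefix b n)}" by blast
  next
    fix x assume "x \<in> {x. \<exists>b. \<forall>n. ?P (seq_prefix x n) (seq_prefix b n)}"
    then obtain b where b: "\<And>n. ?P (seq_prefix x n) (seq_prefix b n)" by blast
    define t where "t = (from_nat (b 0) :: nat list)"
    have "?P (seq_prefix x (Suc (length t))) (seq_prefix b (Suc (length t)))" by (rule b)
    moreover have "hd (seq_prefix b (Suc (length t))) = b 0"
      by (simp add: seq_prefix_def del: upt_Suc add: upt_conv_Cons)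
    ultimately have 1: "\<forall>z. (\<forall>i<length t. z i = t ! i) \<longrightarrow> z \<in> A"
      and 2: "take (length t) (seq_prefix x (Suc (length t))) = t"
      by (auto simp: Let_def t_def seq_prefix_def)
    have "take (length t) (seq_prefix x (Suc (length t))) = seq_prefix x (length t)" by simp
    with 2 have "seq_prefix x (length t) = t" by simp
    then have "\<forall>i<length t. x i = t ! i" by (metis nth_seq_prefix)
    with 1 show "x \<in> A" by blast
  qed
  then show ?thesis unfolding suslin_def by (rule exI[of _ ?P])
qed

lemma suslin_countable_Union:
  assumes "\<And>k::nat. suslin (A k)" shows "suslin (\<Union>k. A k)"
proof -
  have "\<forall>k. \<exists>P. A k = {x. \<exists>b. \<forall>n. P (seq_prefix x n) (seq_prefix b n)}"
    using assms unfolding suslin_def by blast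
  from choice[OF this] obtain P where "\<forall>k. A k = {x. \<exists>b. \<forall>n. P k (seq_prefix x n) (seq_prefix b n)}"
    by blast
  then have P: "\<And>k. A k = {x. \<exists>b. \<forall>n. P k (seq_prefix x n) (seq_prefix b n)}" by blast
  let ?Q = "\<lambda>xs bs. case bs of [] \<Rightarrow> True | k # bs' \<Rightarrow> P k (take (length bs') xs) bs'"
  have "(\<Union>k. A k) = {x. \<exists>b. \<forall>n. ?Q (seq_prefix x n) (seq_prefix b n)}"
  proof (intro set_eqI iffI)
    fix x assume "x \<in> (\<Union>k. A k)"
    then obtain k b where kb: "\<And>n. P k (seq_prefix x n) (seq_prefix b n)" using P by blast
    let ?b = "\<lambda>i. case i of 0 \<Rightarrow> k | Suc j \<Rightarrow> b j"
    have "?Q (seq_prefix x n) (seq_prefix ?b n)" for n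
    proof (cases n)
      case 0 then show ?thesis by (simp add: seq_prefix_def)
    next
      case (Suc m) then show ?thesis using kb[of m] by (simp add: seq_prefix_Suc_case)
    qed
    then show "x \<in> {x. \<exists>b. \<forall>n. ?Q (seq_prefix x n) (seq_prefix b n)}" by blast
  next
    fix x assume "x \<in> {x. \<exists>b. \<forall>n. ?Q (seq_prefix x n) (seq_prefix b n)}"
    then obtain b where b: "\<And>n. ?Q (seq_prefix x n) (seq_prefix b n)" by blast
    have eq: "(\<lambda>i. case i of 0 \<Rightarrow> b 0 | Suc j \<Rightarrow> (b \<circ> Suc) j) = b"
      by (auto split: nat.split)
    have "P (b 0) (seq_prefix x n) (seq_prefix (b \<circ> Suc) n)" for n
    proof -
      have "seq_prefix b (Suc n) = b 0 # seq_prefix (b \<circ> Suc) n"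
        using seq_prefix_Suc_case[of "b 0" "b \<circ> Suc" n] unfolding eq .
      moreover have "take n (seq_prefix x (Suc n)) = seq_prefix x n" by simp
      ultimately show ?thesis using b[of "Suc n"] by simp
    qed
    then show "x \<in> (\<Union>k. A k)" using P by blast
  qed
  then show ?thesis unfolding suslin_def by (rule exI[of _ ?Q])
qed

lemma suslin_countable_Inter:
  assumes "\<And>k::nat. suslin (A k)" shows "suslin (\<Inter>k. A k)"
proof -
  have "\<forall>k. \<exists>P. A k = {x. \<exists>b. \<forall>n. P (seq_prefix x n) (seq_prefix b n)}"
    using assms unfolding suslin_def by blast
  from choice[OF this] obtain P where "\<forall>k. A k = {x. \<exists>b. \<forall>n. P k (seq_prefix x n) (seq_prefix b n)}"
    by blast
  then have P: "\<And>k. A k = {x. \<exists>b. \<forall>n. P k (seq_prefix x n) (seq_prefix b n)}" by blast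
  let ?Q = "\<lambda>xs bs. \<forall>k m. (\<forall>i<m. prod_encode (k,i) < length bs) \<longrightarrow> m \<le> length xs \<longrightarrow>
      P k (take m xs) (map (\<lambda>i. bs ! prod_encode (k,i)) [0..<m])"
    \<comment> \<open>the witness for A k is read off the positions prod_encode (k, i)\<close>
  have "(\<Inter>k. A k) = {x. \<exists>b. \<forall>n. ?Q (seq_prefix x n) (seq_prefix b n)}"
  proof (intro set_eqI iffI)
    fix x assume "x \<in> (\<Inter>k. A k)"
    then have "\<forall>k. \<exists>b. \<forall>n. P k (seq_prefix x n) (seq_prefix b n)" using P by blast
    then obtain bb where bb: "\<And>k n. P k (seq_prefix x n) (seq_prefix (bb k) n)" by metis
    let ?b = "\<lambda>j. case prod_decode j of (k, i) \<Rightarrow> bb k i"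
    have "?Q (seq_prefix x n) (seq_prefix ?b n)" for n
    proof (intro allI impI)
      fix k m assume 1: "\<forall>i<m. prod_encode (k, i) < length (seq_prefix ?b n)" and 2: "m \<le> length (seq_prefix x n)"
      have "map (\<lambda>i. seq_prefix ?b n ! prod_encode (k, i)) [0..<m] = seq_prefix (bb k) m"
        using 1 by (auto simp: seq_prefix_def)
      then show "P k (take m (seq_prefix x n)) (map (\<lambda>i. seq_prefix ?b n ! prod_encode (k, i)) [0..<m])"
        using 2 bb by simp
    qed
    then show "x \<in> {x. \<exists>b. \<forall>n. ?Q (seq_prefix x n) (seq_prefix b n)}" by blast
  next
    fix x assume "x \<in> {x. \<exists>b. \<forall>n. ?Q (seq_prefix x n) (seq_prefix b n)}"
    then obtain b where b: "\<And>n. ?Q (seq_prefix x n) (seq_prefix b n)" by blast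
    have "P k (seq_prefix x m) (seq_prefix (\<lambda>i. b (prod_encode (k,i))) m)" for k m
    proof -
      define n where "n = Suc (\<Sum>i<m. prod_encode (k,i)) + m"
      have 1: "\<forall>i<m. prod_encode (k, i) < length (seq_prefix b n)"
      proof (intro allI impI)
        fix i assume "i < m"
        then have "prod_encode (k,i) \<le> (\<Sum>i<m. prod_encode (k,i))"
          by (intro member_le_sum) auto
        then show "prod_encode (k, i) < length (seq_prefix b n)" by (simp add: n_def)
      qed
      have 2: "m \<le> length (seq_prefix x n)" by (simp add: n_def)
      have "map (\<lambda>i. seq_prefix b n ! prod_encode (k, i)) [0..<m] = seq_prefix (\<lambda>i. b (prod_encode (k,i))) m"
        using 1 by (auto simp: seq_prefix_def)
      moreover have "take m (seq_prefix x n) = seq_prefix x m" using 2 by simp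
      ultimately show ?thesis using b[of n] 1 2 by metis
    qed
    then show "x \<in> (\<Inter>k. A k)" using P by blast
  qed
  then show ?thesis unfolding suslin_def by (rule exI[of _ ?Q])
qed

lemma suslin_borel:
  assumes "A \<in> sets borel" shows "suslin A \<and> suslin (- A)"
proof -
  have "A \<in> sigma_sets UNIV (Collect open)" using assms by (simp add: sets_borel)
  then show ?thesis
  proof induction
    case (Basic a) then show ?case
      using suslin_open suslin_closed by (auto simp: closed_def)
  next
    case Empty
    then show ?case using suslin_open suslin_closed by auto
  next
    case (Compl a) then show ?case by (simp add: Compl_eq_Diff_UNIV[symmetric])
  next
    case (Union a)
    then show ?case using suslin_countable_Union[of a] suslin_countable_Inter[of "\<lambda>k. - a k"]
      by auto
  qed
qed

definition suslin_diagonal :: "(nat \<Rightarrow> nat) set" where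
  "suslin_diagonal = {x. \<exists>b. \<forall>n. x (to_nat (seq_prefix x n, seq_prefix b n)) \<noteq> 0}"

lemma not_suslin_Compl_diagonal: "\<not> suslin (- suslin_diagonal)"
proof
  assume "suslin (- suslin_diagonal)"
  then obtain P where P: "- suslin_diagonal = {x. \<exists>b. \<forall>n. P (seq_prefix x n) (seq_prefix b n)}"
    unfolding suslin_def by blast
  \<comment> \<open>the point coding the scheme P itself witnesses the contradiction\<close>
  define u where
    "u = (\<lambda>k. let (xs, bs) = (from_nat k :: nat list \<times> nat list) in if P xs bs then 1 else (0::nat))"
  have "u (to_nat (xs, bs)) \<noteq> 0 \<longleftrightarrow> P xs bs" for xs bs by (simp add: u_def)
  then have "u \<in> suslin_diagonal \<longleftrightarrow> u \<in> - suslin_diagonal" unfolding P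
    by (simp add: suslin_diagonal_def)
  then show False by simp
qed

lemma suslin_diagonal_not_borel: "suslin_diagonal \<notin> sets borel"
  using suslin_borel not_suslin_Compl_diagonal by blast

section \<open>Trees coded by points of the Cantor space\<close>

definition tree_node :: "(nat \<Rightarrow> nat) \<Rightarrow> nat list \<Rightarrow> bool" where
  "tree_node y s \<longleftrightarrow> (\<forall>n. 0 < n \<longrightarrow> n \<le> length s \<longrightarrow> y (to_nat (take n s)) = 1)"

definition ill_founded :: "(nat \<Rightarrow> nat) \<Rightarrow> bool" where
  "ill_founded y \<longleftrightarrow> (\<exists>b. \<forall>n. tree_node y (seq_prefix b n))"

definition leaf_code :: "nat list \<Rightarrow> nat \<Rightarrow> nat" where
  "leaf_code s = (\<lambda>i. if i < length s then s ! i + 1 else 0)"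

definition branch_code :: "(nat \<Rightarrow> nat) \<Rightarrow> nat \<Rightarrow> nat" where
  "branch_code b = (\<lambda>i. b i + 1)"

definition tree_leaf :: "(nat \<Rightarrow> nat) \<Rightarrow> nat list \<Rightarrow> bool" where
  "tree_leaf y s \<longleftrightarrow> tree_node y s \<and> (\<forall>j. y (to_nat (s @ [j])) \<noteq> 1)"

text \<open>The values over y are the branches of the tree coded by y, shifted by one so that 0 can
  serve as an end marker, together with its leaves padded with zeros.\<close>

definition branch_map :: "(nat \<Rightarrow> nat) \<Rightarrow> (nat \<Rightarrow> nat) set" where
  "branch_map y =
     {branch_code b | b. \<forall>n. tree_node y (seq_prefix b n)} \<union> {leaf_code s | s. tree_leaf y s}"

lemma tree_node_Nil[simp]: "tree_node y []" by (simp add: tree_node_def)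

lemma tree_node_take: "tree_node y s \<Longrightarrow> tree_node y (take m s)"
  by (auto simp: tree_node_def min_def)

lemma tree_node_snoc: "tree_node y (s @ [j]) \<longleftrightarrow> tree_node y s \<and> y (to_nat (s @ [j])) = 1"
proof
  assume a: "tree_node y (s @ [j])"
  have "tree_node y (take (length s) (s @ [j]))" by (rule tree_node_take[OF a])
  then show "tree_node y s \<and> y (to_nat (s @ [j])) = 1" using a by (auto simp: tree_node_def)
next
  assume a: "tree_node y s \<and> y (to_nat (s @ [j])) = 1"
  show "tree_node y (s @ [j])" unfolding tree_node_def
  proof (intro allI impI)
    fix n assume "0 < n" "n \<le> length (s @ [j])"
    then consider "n \<le> length s" | "n = Suc (length s)" by force
    then show "y (to_nat (take n (s @ [j]))) = 1"
      by cases (use a \<open>0<n\<close> in \<open>auto simp: tree_node_def\<close>)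
  qed
qed

lemma leaf_code_eq_0_iff: "leaf_code s i = 0 \<longleftrightarrow> length s \<le> i"
  by (auto simp: leaf_code_def)

lemma branch_code_neq_0: "branch_code b i \<noteq> 0" by (simp add: branch_code_def)

lemma branch_map_first_zero:
  assumes "v \<in> branch_map y" "v k = 0" "\<forall>i<k. v i \<noteq> 0"
  shows "v = leaf_code (map (\<lambda>i. v i - 1) [0..<k]) \<and> tree_leaf y (map (\<lambda>i. v i - 1) [0..<k])"
proof -
  from assms(1,2) obtain s where s: "v = leaf_code s" "tree_leaf y s"
    unfolding branch_map_def using branch_code_neq_0 by blast
  have "\<not> length s < k"
  proof
    assume "length s < k"
    then have "v (length s) \<noteq> 0" using assms(3) by blast
    then show False using s(1) by (simp add: leaf_code_eq_0_iff)
  qed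
  moreover have "\<not> k < length s" using assms(2) s(1) by (simp add: leaf_code_eq_0_iff)
  ultimately have "length s = k" by simp
  moreover have "s ! i = v i - 1" if "i < k" for i
    using that s(1) \<open>length s = k\<close> by (simp add: leaf_code_def)
  ultimately have "s = map (\<lambda>i. v i - 1) [0..<k]"
    by (intro nth_equalityI) auto
  with s show ?thesis by simp
qed

lemma ex_branch_through_node:
  assumes "tree_node y s" and no_leaf: "\<And>r. \<not> tree_leaf y (s @ r)"
  shows "\<exists>b. (\<forall>n. tree_node y (seq_prefix b n)) \<and> seq_prefix b (length s) = s"
proof -
  have step: "\<exists>j. tree_node y (t @ [j])" if "tree_node y t" "\<exists>r. t = s @ r" for t
  proof -
    from that(2) no_leaf have "\<not> tree_leaf y t" by blast
    with that(1) obtain j where "y (to_nat (t @ [j])) = 1" unfolding tree_leaf_def by blast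
    with that(1) show ?thesis using tree_node_snoc by blast
  qed
  define R where "R = rec_nat s (\<lambda>n t. t @ [SOME j. tree_node y (t @ [j])])"
  have R0: "R 0 = s" and RS: "R (Suc n) = R n @ [SOME j. tree_node y (R n @ [j])]" for n
    by (simp_all add: R_def)
  have inv: "tree_node y (R n) \<and> (\<exists>r. R n = s @ r) \<and> length (R n) = length s + n" for n
  proof (induction n)
    case 0 then show ?case using assms R0 by simp
  next
    case (Suc n)
    then have "\<exists>j. tree_node y (R n @ [j])" using step by blast
    then have "tree_node y (R n @ [SOME j. tree_node y (R n @ [j])])" by (rule someI_ex)
    with Suc show ?case by (auto simp: RS)
  qed
  have prefix: "take (length (R n)) (R (n + k)) = R n" for n k
  proof (induction k)
    case (Suc k)
    have "take (length (R n)) (R (n + Suc k)) = take (length (R n)) (R (n + k))"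
      using inv[of n] inv[of "n+k"] by (simp add: RS)
    with Suc show ?case by simp
  qed simp
  have nth_R: "R m ! i = R (Suc i) ! i" if im: "Suc i \<le> m" for i m
  proof -
    obtain k where m: "m = Suc i + k" using le_Suc_ex[OF im] by blast
    have "i < length (R (Suc i))" using inv[of "Suc i"] by linarith
    then have "take (length (R (Suc i))) (R m) ! i = R m ! i" by (rule nth_take)
    then show ?thesis using prefix[of "Suc i" k] unfolding m by simp
  qed
  define b where "b i = R (Suc i) ! i" for i
  have seq_prefix_b: "seq_prefix b n = take n (R n)" for n
  proof (rule nth_equalityI)
    show "length (seq_prefix b n) = length (take n (R n))" using inv[of n] by simp
    fix i assume "i < length (seq_prefix b n)"
    then show "seq_prefix b n ! i = take n (R n) ! i" using nth_R[of i n] by (simp add: b_def)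
  qed
  have "\<forall>n. tree_node y (seq_prefix b n)" using inv tree_node_take by (simp add: seq_prefix_b)
  moreover have "seq_prefix b (length s) = s"
  proof -
    obtain r where "R (length s) = s @ r" using inv by blast
    then show ?thesis by (simp add: seq_prefix_b)
  qed
  ultimately show ?thesis by blast
qed

lemma tree_node_extends_in_branch_map:
  assumes "tree_node y s"
  shows "\<exists>w\<in>branch_map y. \<forall>i<length s. w i = s ! i + 1"
proof (cases "\<exists>r. tree_leaf y (s @ r)")
  case True
  then obtain r where "tree_leaf y (s @ r)" by blast
  then have "leaf_code (s @ r) \<in> branch_map y" by (auto simp: branch_map_def)
  moreover have "\<forall>i<length s. leaf_code (s @ r) i = s ! i + 1"
    by (auto simp: leaf_code_def nth_append)
  ultimately show ?thesis by blast
next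
  case False
  then obtain b where b: "\<forall>n. tree_node y (seq_prefix b n)" "seq_prefix b (length s) = s"
    using ex_branch_through_node[OF assms] by blast
  then have "branch_code b \<in> branch_map y" by (auto simp: branch_map_def)
  moreover have "\<forall>i<length s. branch_code b i = s ! i + 1"
  proof (intro allI impI)
    fix i assume "i < length s"
    then have "b i = s ! i" using b(2) nth_seq_prefix by metis
    then show "branch_code b i = s ! i + 1" by (simp add: branch_code_def)
  qed
  ultimately show ?thesis by blast
qed

lemma branch_map_nonempty: "branch_map y \<noteq> {}"
  using tree_node_extends_in_branch_map[OF tree_node_Nil] by blast

lemma branch_map_avoids_cylinder_if_zero:
  assumes w: "w \<notin> branch_map y" and "w i = 0"
  shows "\<exists>N. cylinder w N \<inter> branch_map y = {}"
proof -
  define i0 where "i0 = (LEAST i. w i = 0)"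
  have w_i0: "w i0 = 0" unfolding i0_def using assms(2) by (rule LeastI)
  have before_i0: "\<forall>i<i0. w i \<noteq> 0" unfolding i0_def using not_less_Least by blast
  define s where "s = map (\<lambda>i. w i - 1) [0..<i0]"
  have agree_leaf: "v = leaf_code s \<and> tree_leaf y s"
    if "v \<in> branch_map y" "\<forall>i\<le>i0. v i = w i" for v
  proof -
    have "map (\<lambda>i. v i - 1) [0..<i0] = s" using that(2) by (simp add: s_def)
    moreover have "v i0 = 0" "\<forall>i<i0. v i \<noteq> 0" using that(2) w_i0 before_i0 by auto
    ultimately show ?thesis using branch_map_first_zero[OF that(1)] by metis
  qed
  have "\<not> tree_leaf y s \<or> (\<exists>j. w j \<noteq> leaf_code s j)"
    using w by (auto simp: branch_map_def fun_eq_iff)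
  then obtain j where j: "\<not> tree_leaf y s \<or> w j \<noteq> leaf_code s j" by blast
  have "cylinder w (Suc (max i0 j)) \<inter> branch_map y = {}"
  proof (rule ccontr)
    assume "cylinder w (Suc (max i0 j)) \<inter> branch_map y \<noteq> {}"
    then obtain v where "v \<in> branch_map y" "\<forall>i\<le>max i0 j. v i = w i"
      by (auto simp: cylinder_def less_Suc_eq_le)
    with agree_leaf j show False by auto
  qed
  then show ?thesis by blast
qed

lemma branch_map_avoids_cylinder_if_nonzero:
  assumes w: "w \<notin> branch_map y" and nonzero: "\<forall>i. w i \<noteq> 0"
  shows "\<exists>N. cylinder w N \<inter> branch_map y = {}"
proof -
  define b where "b i = w i - 1" for i
  have wb: "w = branch_code b" using nonzero by (auto simp: branch_code_def b_def)
  then obtain n where n: "\<not> tree_node y (seq_prefix b n)" using w by (auto simp: branch_map_def)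
  have "cylinder w n \<inter> branch_map y = {}"
  proof (rule ccontr)
    assume "cylinder w n \<inter> branch_map y \<noteq> {}"
    then obtain v where v: "v \<in> branch_map y" "\<forall>i<n. v i = w i" by (auto simp: cylinder_def)
    from v(1) consider b' where "v = branch_code b'" "\<forall>n. tree_node y (seq_prefix b' n)"
      | s' where "v = leaf_code s'" "tree_leaf y s'"
      by (auto simp: branch_map_def)
    then show False
    proof cases
      case 1
      then have "seq_prefix b' n = seq_prefix b n"
        using v(2) wb by (auto simp: seq_prefix_eq_iff branch_code_def)
      with 1 n show False by metis
    next
      case 2
      have "n \<le> length s'"
      proof (rule ccontr)
        assume "\<not> n \<le> length s'"
        then have "v (length s') = 0" "length s' < n" using 2 by (auto simp: leaf_code_eq_0_iff)
        then show False using v(2) wb branch_code_neq_0 by metis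
      qed
      have "take n s' = seq_prefix b n"
      proof (rule nth_equalityI)
        show "length (take n s') = length (seq_prefix b n)" using \<open>n \<le> length s'\<close> by simp
        fix i assume "i < length (take n s')"
        then have "i < n" "i < length s'" by auto
        moreover have "v i = w i" using v(2) \<open>i<n\<close> by blast
        ultimately show "take n s' ! i = seq_prefix b n ! i"
          using 2(1) wb by (simp add: leaf_code_def branch_code_def)
      qed
      moreover have "tree_node y s'" using 2 by (simp add: tree_leaf_def)
      ultimately show False using tree_node_take n by metis
    qed
  qed
  then show ?thesis by blast
qed

lemma closed_branch_map: "closed (branch_map y)"
  by (rule closed_cylinderI)
    (metis branch_map_avoids_cylinder_if_zero branch_map_avoids_cylinder_if_nonzero)

lemma ex_ge_if_inj:
  fixes f :: "nat \<Rightarrow> nat"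
  assumes "inj f" shows "\<exists>j. N \<le> f j"
proof (rule ccontr)
  assume "\<not> ?thesis"
  then have "range f \<subseteq> {..<N}" by (auto simp: not_le)
  then have "finite (range f)" by (rule finite_subset) simp
  then have "finite (UNIV :: nat set)" using assms by (rule finite_imageD)
  then show False by simp
qed

lemma mcontinuous_at_branch_map_if_ill_founded:
  assumes "ill_founded y"
  shows "mcontinuous_at baire_dist baire_dist cantor_space branch_map y"
proof -
  obtain b where b: "\<And>n. tree_node y (seq_prefix b n)" using assms by (auto simp: ill_founded_def)
  have "\<exists>\<delta>>0. \<forall>y'\<in>cantor_space. baire_dist y y' < \<delta> \<longrightarrow>
          (\<exists>w'\<in>branch_map y'. baire_dist (branch_code b) w' < e)" if e: "e > 0" for e
  proof -
    obtain m where m: "1 / (real m + 1) < e" using ex_inverse_Suc_less[OF e] by blast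
    define M where "M = Max ((\<lambda>k. to_nat (seq_prefix b k)) ` {..m})"
    have code_le_M: "to_nat (seq_prefix b k) \<le> M" if "k \<le> m" for k
      unfolding M_def using that by (intro Max_ge) auto
    have "\<exists>w'\<in>branch_map y'. baire_dist (branch_code b) w' < e"
      if y': "baire_dist y y' < 1 / (real M + 1)" for y'
    proof -
      have "tree_node y' (seq_prefix b m)" unfolding tree_node_def
      proof (intro allI impI)
        fix n assume n: "0 < n" "n \<le> length (seq_prefix b m)"
        then have "y (to_nat (seq_prefix b n)) = y' (to_nat (seq_prefix b n))"
          using agree_if_baire_dist_less[OF y' code_le_M] by simp
        moreover have "y (to_nat (seq_prefix b n)) = 1" using b[of n] n by (simp add: tree_node_def)
        ultimately show "y' (to_nat (take n (seq_prefix b m))) = 1" using n by simp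
      qed
      from tree_node_extends_in_branch_map[OF this]
      obtain w' where w': "w' \<in> branch_map y'" "\<forall>i<m. w' i = b i + 1" by auto
      have "baire_dist (branch_code b) w' \<le> 1 / (real m + 1)"
        using w'(2) by (intro baire_dist_le_if_agree) (simp add: branch_code_def)
      with m w'(1) show ?thesis by force
    qed
    then show ?thesis by (intro exI[of _ "1 / (real M + 1)"]) auto
  qed
  moreover have "branch_code b \<in> branch_map y" using b by (auto simp: branch_map_def)
  ultimately show ?thesis unfolding mcontinuous_at_def by blast
qed

text \<open>At a leaf s, switching on the far-away coordinate coding s @ [j] produces a nearby tree
  in which s is no longer a leaf, so no value over it is close to leaf_code s.\<close>

lemma ill_founded_if_mcontinuous_at_branch_map:
  assumes y: "y \<in> cantor_space" and cont: "mcontinuous_at baire_dist baire_dist cantor_space branch_map y"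
  shows "ill_founded y"
proof -
  obtain w where w: "w \<in> branch_map y" and w_cont: "\<And>e. e > 0 \<Longrightarrow> \<exists>\<delta>>0. \<forall>y'\<in>cantor_space.
      baire_dist y y' < \<delta> \<longrightarrow> (\<exists>w'\<in>branch_map y'. baire_dist w w' < e)"
    using cont unfolding mcontinuous_at_def by blast
  from w consider b where "\<forall>n. tree_node y (seq_prefix b n)" | s where "w = leaf_code s" "tree_leaf y s"
    by (auto simp: branch_map_def)
  then show ?thesis
  proof cases
    case 1 then show ?thesis by (auto simp: ill_founded_def)
  next
    case (2 s)
    obtain \<delta> where \<delta>: "\<delta> > 0" "\<forall>y'\<in>cantor_space. baire_dist y y' < \<delta> \<longrightarrow>
        (\<exists>w'\<in>branch_map y'. baire_dist w w' < 1 / (real (length s) + 1))"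
      using w_cont[of "1 / (real (length s) + 1)"] by auto
    obtain N where N: "1 / (real N + 1) < \<delta>" using ex_inverse_Suc_less[OF \<delta>(1)] by blast
    have "inj (\<lambda>j. to_nat (s @ [j]))" by (rule injI) simp
    then obtain j where j: "N \<le> to_nat (s @ [j])" using ex_ge_if_inj by blast
    define y' where "y' = y(to_nat (s @ [j]) := 1)"
    have "y' \<in> cantor_space" using y by (auto simp: cantor_space_def y'_def)
    moreover have "baire_dist y y' < \<delta>"
      using j N baire_dist_le_if_agree[of N y y'] by (auto simp: y'_def)
    ultimately obtain w' where w': "w' \<in> branch_map y'" "baire_dist w w' < 1 / (real (length s) + 1)"
      using \<delta>(2) by blast
    have w'_leaf: "w' i = leaf_code s i" if "i \<le> length s" for i
      using agree_if_baire_dist_less[OF w'(2) that] 2(1) by simp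
    have "w' (length s) = 0" using w'_leaf[of "length s"] by (simp add: leaf_code_def)
    moreover have "\<forall>i<length s. w' i \<noteq> 0"
    proof (intro allI impI)
      fix i assume "i < length s"
      then show "w' i \<noteq> 0" using w'_leaf[of i] by (simp add: leaf_code_def)
    qed
    ultimately have "tree_leaf y' (map (\<lambda>i. w' i - 1) [0..<length s])"
      using branch_map_first_zero[OF w'(1)] by blast
    moreover have "map (\<lambda>i. w' i - 1) [0..<length s] = s"
      using w'_leaf by (intro nth_equalityI) (auto simp: leaf_code_def)
    ultimately have "y' (to_nat (s @ [j])) \<noteq> 1" by (simp add: tree_leaf_def)
    then show ?thesis by (simp add: y'_def)
  qed
qed

lemma mcontinuous_at_branch_map_iff:
  "y \<in> cantor_space \<Longrightarrow> mcontinuous_at baire_dist baire_dist cantor_space branch_map y \<longleftrightarrow> ill_founded y"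
  using mcontinuous_at_branch_map_if_ill_founded ill_founded_if_mcontinuous_at_branch_map by blast

section \<open>Ill-founded trees form an analytic non-Borel set\<close>

definition evens :: "(nat \<Rightarrow> nat) \<Rightarrow> nat \<Rightarrow> nat" where "evens z = (\<lambda>i. z (2 * i))"

definition odds :: "(nat \<Rightarrow> nat) \<Rightarrow> nat \<Rightarrow> nat" where "odds z = (\<lambda>i. z (2 * i + 1))"

definition interleave :: "(nat \<Rightarrow> nat) \<Rightarrow> (nat \<Rightarrow> nat) \<Rightarrow> nat \<Rightarrow> nat" where
  "interleave a b = (\<lambda>i. if even i then a (i div 2) else b (i div 2))"

lemma evens_interleave[simp]: "evens (interleave a b) = a" by (simp add: evens_def interleave_def)

lemma odds_interleave[simp]: "odds (interleave a b) = b" by (simp add: odds_def interleave_def)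

lemma evens_cylinder: "z' \<in> cylinder z N \<Longrightarrow> 2 * c < N \<Longrightarrow> evens z' c = evens z c"
  by (simp add: cylinder_def evens_def)

lemma odds_cylinder: "z' \<in> cylinder z N \<Longrightarrow> 2 * c + 1 < N \<Longrightarrow> odds z' c = odds z c"
  by (simp add: cylinder_def odds_def)

lemma continuous_evens: "continuous_on UNIV evens"
  unfolding evens_def
    by (intro continuous_on_coordinatewise_then_product continuous_on_product_coordinates)

lemma tree_node_cong:
  assumes "\<forall>k. 0 < k \<longrightarrow> k \<le> length s \<longrightarrow> y (to_nat (take k s)) = y' (to_nat (take k s))"
  shows "tree_node y s = tree_node y' s"
  using assms by (auto simp: tree_node_def)

lemma locally_constant_tree_node:
  assumes L: "\<And>z. \<exists>N. \<forall>z'\<in>cylinder z N. L z' = L z"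
  shows "\<exists>N. \<forall>z'\<in>cylinder z N. (tree_node (evens z') (L z') \<longleftrightarrow> tree_node (evens z) (L z))"
proof -
  obtain N1 where N1: "\<forall>z'\<in>cylinder z N1. L z' = L z" using L by blast
  define M where "M = Max ((\<lambda>k. to_nat (take k (L z))) ` {..length (L z)})"
  have cM: "to_nat (take k (L z)) \<le> M" if "k \<le> length (L z)" for k
    unfolding M_def using that by (intro Max_ge) auto
  have "\<forall>z'\<in>cylinder z (N1 + Suc (2 * M)). (tree_node (evens z') (L z') \<longleftrightarrow> tree_node (evens z) (L z))"
  proof
    fix z' assume z': "z' \<in> cylinder z (N1 + Suc (2 * M))"
    have "z' \<in> cylinder z N1" by (rule cylinder_mono[OF z']) simp
    then have "L z' = L z" using N1 by blast
    moreover have "tree_node (evens z') (L z) = tree_node (evens z) (L z)"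
    proof (rule tree_node_cong, intro allI impI)
      fix k assume "0 < k" "k \<le> length (L z)"
      then have "to_nat (take k (L z)) \<le> M" using cM by blast
      then have "2 * to_nat (take k (L z)) < N1 + Suc (2 * M)" by linarith
      then show "evens z' (to_nat (take k (L z))) = evens z (to_nat (take k (L z)))"
        by (rule evens_cylinder[OF z'])
    qed
    ultimately show "tree_node (evens z') (L z') \<longleftrightarrow> tree_node (evens z) (L z)" by simp
  qed
  then show ?thesis by blast
qed

lemma locally_constant_evens: "\<exists>N. \<forall>z'\<in>cylinder z N. (Q (evens z' c) \<longleftrightarrow> Q (evens z c))"
  by (rule exI[of _ "Suc (2 * c)"]) (auto simp: evens_cylinder)

lemma locally_constant_odds: "\<exists>N. \<forall>z'\<in>cylinder z N. (Q (odds z' c) \<longleftrightarrow> Q (odds z c))"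
  by (rule exI[of _ "Suc (2 * c + 1)"]) (auto simp: odds_cylinder)

lemma locally_constant_odds_prefix:
  "\<exists>N. \<forall>z'\<in>cylinder z N. seq_prefix (\<lambda>i. odds z' i - k) n = seq_prefix (\<lambda>i. odds z i - k) n"
proof (rule exI[of _ "2 * n + 1"], intro ballI)
  fix z' assume z': "z' \<in> cylinder z (2 * n + 1)"
  show "seq_prefix (\<lambda>i. odds z' i - k) n = seq_prefix (\<lambda>i. odds z i - k) n"
    unfolding seq_prefix_eq_iff using odds_cylinder[OF z'] by simp
qed

lemma closed_evens_cantor: "closed {z. evens z \<in> cantor_space}"
proof -
  have "{z. evens z \<in> cantor_space} = (\<Inter>i. {z. evens z i \<in> {0,1}})"
    by (auto simp: cantor_space_def)
  moreover have "closed {z. evens z i \<in> {0,1}}" for i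
    by (rule locally_constant_clopen(1)) (rule locally_constant_evens)
  ultimately show ?thesis by (simp add: closed_INT)
qed

abbreviation ill_founded_trees :: "(nat \<Rightarrow> nat) set" where
  "ill_founded_trees \<equiv> {y \<in> cantor_space. ill_founded y}"

definition ill_founded_witnesses :: "(nat \<Rightarrow> nat) set" where
  "ill_founded_witnesses =
     {z. evens z \<in> cantor_space \<and> (\<forall>n. tree_node (evens z) (seq_prefix (odds z) n))}"

lemma closed_ill_founded_witnesses: "closed ill_founded_witnesses"
proof -
  have eq: "ill_founded_witnesses = {z. evens z \<in> cantor_space} \<inter>
      (\<Inter>n. {z. tree_node (evens z) (seq_prefix (\<lambda>i. odds z i - 0) n)})"
    by (auto simp: ill_founded_witnesses_def)
  have c1: "closed {z. tree_node (evens z) (seq_prefix (\<lambda>i. odds z i - 0) n)}" for n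
    by (rule locally_constant_clopen(1)) (rule locally_constant_tree_node, rule locally_constant_odds_prefix)
  have c2: "closed (\<Inter>n. {z. tree_node (evens z) (seq_prefix (\<lambda>i. odds z i - 0) n)})"
    by (rule closed_INT) (intro ballI c1)
  show ?thesis unfolding eq by (rule closed_Int[OF closed_evens_cantor c2])
qed

lemma evens_image_ill_founded_witnesses:
  "evens ` ill_founded_witnesses = ill_founded_trees"
proof (intro set_eqI iffI)
  fix y assume "y \<in> evens ` ill_founded_witnesses"
  then obtain z where "z \<in> ill_founded_witnesses" "y = evens z" by blast
  then show "y \<in> ill_founded_trees"
    by (auto simp: ill_founded_witnesses_def ill_founded_def)
next
  fix y assume "y \<in> ill_founded_trees"
  then obtain b where "y \<in> cantor_space" "\<And>n. tree_node y (seq_prefix b n)"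
    by (auto simp: ill_founded_def)
  then have "interleave y b \<in> ill_founded_witnesses" by (simp add: ill_founded_witnesses_def)
  show "y \<in> evens ` ill_founded_witnesses"
  proof (rule image_eqI)
    show "y = evens (interleave y b)" by simp
  qed fact
qed

lemma analytic_ill_founded: "analytic_set ill_founded_trees"
  unfolding analytic_set_def
proof (intro exI conjI)
  show "closed ill_founded_witnesses" by (rule closed_ill_founded_witnesses)
  show "continuous_on ill_founded_witnesses evens" using continuous_evens
    by (rule continuous_on_subset) simp
  show "evens ` ill_founded_witnesses = ill_founded_trees"
    by (rule evens_image_ill_founded_witnesses)
qed

lemma mcontinuity_points_branch_map:
  "mcontinuity_points baire_dist baire_dist cantor_space branch_map = ill_founded_trees"
  unfolding mcontinuity_points_def using mcontinuous_at_branch_map_iff by auto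

text \<open>A continuous reduction of the diagonal set to the ill-founded trees.\<close>

definition diagonal_node :: "(nat \<Rightarrow> nat) \<Rightarrow> nat list \<Rightarrow> bool" where
  "diagonal_node x s \<longleftrightarrow> (\<forall>n\<le>length s. x (to_nat (seq_prefix x n, take n s)) \<noteq> 0)"

definition diagonal_tree :: "(nat \<Rightarrow> nat) \<Rightarrow> nat \<Rightarrow> nat" where
  "diagonal_tree x = (\<lambda>k. if diagonal_node x (from_nat k) then 1 else 0)"

lemma diagonal_tree_in_cantor:
  "diagonal_tree x \<in> cantor_space" by (simp add: diagonal_tree_def cantor_space_def)

lemma tree_node_diagonal_tree:
  "tree_node (diagonal_tree x) s \<longleftrightarrow> (\<forall>n. 0 < n \<longrightarrow> n \<le> length s \<longrightarrow> diagonal_node x (take n s))"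
  unfolding tree_node_def diagonal_tree_def by auto

lemma diagonal_node_seq_prefix:
  "diagonal_node x (seq_prefix b m) \<longleftrightarrow> (\<forall>k\<le>m. x (to_nat (seq_prefix x k, seq_prefix b k)) \<noteq> 0)"
  by (simp add: diagonal_node_def)

lemma ill_founded_diagonal_tree_iff: "ill_founded (diagonal_tree x) \<longleftrightarrow> x \<in> suslin_diagonal"
proof
  assume "ill_founded (diagonal_tree x)"
  then obtain b where b: "\<And>n. tree_node (diagonal_tree x) (seq_prefix b n)"
    by (auto simp: ill_founded_def)
  have "x (to_nat (seq_prefix x n, seq_prefix b n)) \<noteq> 0" for n
  proof -
    have "diagonal_node x (take (Suc n) (seq_prefix b (Suc n)))" using b[of "Suc n"]
      by (simp add: tree_node_diagonal_tree)
    then show ?thesis by (simp add: diagonal_node_seq_prefix)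
  qed
  then show "x \<in> suslin_diagonal" by (auto simp: suslin_diagonal_def)
next
  assume "x \<in> suslin_diagonal"
  then obtain b where b: "\<And>n. x (to_nat (seq_prefix x n, seq_prefix b n)) \<noteq> 0"
    by (auto simp: suslin_diagonal_def)
  have "tree_node (diagonal_tree x) (seq_prefix b n)" for n
    unfolding tree_node_diagonal_tree using b by (simp add: diagonal_node_seq_prefix)
  then show "ill_founded (diagonal_tree x)" by (auto simp: ill_founded_def)
qed

lemma continuous_diagonal_tree: "continuous_on UNIV diagonal_tree"
proof (rule continuous_on_locally_constant_coordinates)
  fix x k
  define s where "s = (from_nat k :: nat list)"
  define M where "M = Max ((\<lambda>n. to_nat (seq_prefix x n, take n s)) ` {..length s})"
  have cM: "to_nat (seq_prefix x n, take n s) \<le> M" if "n \<le> length s" for n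
    unfolding M_def using that by (intro Max_ge) auto
  have "\<forall>z\<in>cylinder x (Suc (M + length s)). diagonal_tree z k = diagonal_tree x k"
  proof
    fix z assume z: "z \<in> cylinder x (Suc (M + length s))"
    have "diagonal_node z s = diagonal_node x s" unfolding diagonal_node_def
    proof (intro all_cong imp_cong refl)
      fix n assume n: "n \<le> length s"
      have "seq_prefix z n = seq_prefix x n" using z n
        by (auto simp: cylinder_def seq_prefix_eq_iff)
      moreover have "z (to_nat (seq_prefix x n, take n s)) = x (to_nat (seq_prefix x n, take n s))"
        using z cM[OF n] by (auto simp: cylinder_def)
      ultimately show "(z (to_nat (seq_prefix z n, take n s)) \<noteq> 0) = (x (to_nat (seq_prefix x n, take n s)) \<noteq> 0)"
        by simp
    qed
    then show "diagonal_tree z k = diagonal_tree x k" by (simp add: diagonal_tree_def s_def)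
  qed
  then show "\<exists>N. \<forall>z\<in>cylinder x N. diagonal_tree z k = diagonal_tree x k" by blast
qed

lemma ill_founded_not_borel: "ill_founded_trees \<notin> sets borel"
proof
  assume A: "ill_founded_trees \<in> sets borel"
  have "diagonal_tree \<in> borel_measurable borel"
    by (rule borel_measurable_continuous_onI[OF continuous_diagonal_tree])
  from measurable_sets[OF this A] have "diagonal_tree -` ill_founded_trees \<in> sets borel" by simp
  moreover have "diagonal_tree -` ill_founded_trees = suslin_diagonal"
    using diagonal_tree_in_cantor ill_founded_diagonal_tree_iff by auto
  ultimately show False using suslin_diagonal_not_borel by simp
qed

section \<open>The graph of the branch map is Borel\<close>

lemma branch_map_iff:
  "y \<in> branch_map x \<longleftrightarrow>
     ((\<forall>i. y i \<noteq> 0) \<and> (\<forall>n. tree_node x (seq_prefix (\<lambda>i. y i - 1) n))) \<or>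
     (\<exists>s. tree_leaf x s \<and> y = leaf_code s)"
proof
  assume "y \<in> branch_map x"
  then consider b where "y = branch_code b" "\<forall>n. tree_node x (seq_prefix b n)"
    | s where "y = leaf_code s" "tree_leaf x s"
    by (auto simp: branch_map_def)
  then show "((\<forall>i. y i \<noteq> 0) \<and> (\<forall>n. tree_node x (seq_prefix (\<lambda>i. y i - 1) n))) \<or>
      (\<exists>s. tree_leaf x s \<and> y = leaf_code s)"
  proof cases
    case 1
    then have "(\<lambda>i. y i - 1) = b" by (auto simp: branch_code_def)
    with 1 show ?thesis by (auto simp: branch_code_def)
  next
    case 2 then show ?thesis by blast
  qed
next
  assume "((\<forall>i. y i \<noteq> 0) \<and> (\<forall>n. tree_node x (seq_prefix (\<lambda>i. y i - 1) n))) \<or> (\<exists>s. tree_leaf x s \<and> y = leaf_code s)"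
  then show "y \<in> branch_map x"
  proof
    assume a: "(\<forall>i. y i \<noteq> 0) \<and> (\<forall>n. tree_node x (seq_prefix (\<lambda>i. y i - 1) n))"
    then have "y = branch_code (\<lambda>i. y i - 1)" by (auto simp: branch_code_def)
    with a show ?thesis unfolding branch_map_def by blast
  next
    assume "\<exists>s. tree_leaf x s \<and> y = leaf_code s"
    then show ?thesis unfolding branch_map_def by blast
  qed
qed

definition interleaved_graph :: "(nat \<Rightarrow> nat) set" where
  "interleaved_graph = {z. evens z \<in> cantor_space \<and> odds z \<in> branch_map (evens z)}"

definition graph_branch_part :: "(nat \<Rightarrow> nat) set" where
  "graph_branch_part = (\<Inter>i. {z. odds z i \<noteq> 0}) \<inter> (\<Inter>n. {z. tree_node (evens z) (seq_prefix (\<lambda>i. odds z i - 1) n)})"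

definition graph_leaf_part :: "nat list \<Rightarrow> (nat \<Rightarrow> nat) set" where
  "graph_leaf_part s = {z. tree_node (evens z) s} \<inter>
     (\<Inter>j. {z. evens z (to_nat (s @ [j])) \<noteq> 1}) \<inter> (\<Inter>i. {z. odds z i = leaf_code s i})"

lemma interleaved_graph_eq:
  "interleaved_graph = {z. evens z \<in> cantor_space} \<inter> (graph_branch_part \<union> (\<Union>s. graph_leaf_part s))"
  unfolding interleaved_graph_def graph_branch_part_def graph_leaf_part_def branch_map_iff tree_leaf_def
  by (auto simp: fun_eq_iff)

lemma closed_graph_branch_part: "closed graph_branch_part"
proof -
  have c1: "closed {z. odds z i \<noteq> 0}" for i
    by (rule locally_constant_clopen(1)) (rule locally_constant_odds)
  have c2: "closed {z. tree_node (evens z) (seq_prefix (\<lambda>i. odds z i - 1) n)}" for n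
    by (rule locally_constant_clopen(1)) (rule locally_constant_tree_node, rule locally_constant_odds_prefix)
  have "closed (\<Inter>i. {z. odds z i \<noteq> 0})" by (rule closed_INT) (intro ballI c1)
  moreover have "closed (\<Inter>n. {z. tree_node (evens z) (seq_prefix (\<lambda>i. odds z i - 1) n)})"
    by (rule closed_INT) (intro ballI c2)
  ultimately show ?thesis unfolding graph_branch_part_def by (rule closed_Int)
qed

lemma closed_graph_leaf_part: "closed (graph_leaf_part s)"
proof -
  have c1: "closed {z. tree_node (evens z) s}"
  proof (rule locally_constant_clopen(1))
    fix z show "\<exists>N. \<forall>z'\<in>cylinder z N. tree_node (evens z') s = tree_node (evens z) s"
      using locally_constant_tree_node[of "\<lambda>_. s" z] by simp
  qed
  have c2: "closed {z. evens z (to_nat (s @ [j])) \<noteq> 1}" for j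
    by (rule locally_constant_clopen(1)) (rule locally_constant_evens)
  have c3: "closed {z. odds z i = leaf_code s i}" for i
    by (rule locally_constant_clopen(1)) (rule locally_constant_odds)
  have "closed (\<Inter>j. {z. evens z (to_nat (s @ [j])) \<noteq> 1})" by (rule closed_INT) (intro ballI c2)
  moreover have "closed (\<Inter>i. {z. odds z i = leaf_code s i})" by (rule closed_INT) (intro ballI c3)
  ultimately show ?thesis unfolding graph_leaf_part_def using c1 by (intro closed_Int)
qed

lemma borel_interleaved_graph: "interleaved_graph \<in> sets borel"
proof -
  have "(\<Union>s. graph_leaf_part s) \<in> sets borel"
    by (rule sets.countable_UN'') (auto intro: borel_closed closed_graph_leaf_part)
  moreover have "graph_branch_part \<in> sets borel" by (rule borel_closed[OF closed_graph_branch_part])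
  moreover have "{z. evens z \<in> cantor_space} \<in> sets borel"
    by (rule borel_closed[OF closed_evens_cantor])
  ultimately show ?thesis unfolding interleaved_graph_eq by auto
qed

definition interleave_pair :: "(nat \<Rightarrow> nat) \<times> (nat \<Rightarrow> nat) \<Rightarrow> nat \<Rightarrow> nat" where
  "interleave_pair p = interleave (fst p) (snd p)"

lemma continuous_interleave_pair: "continuous_on UNIV interleave_pair"
proof (rule continuous_on_coordinatewise_then_product)
  fix i
  have f: "continuous_on UNIV (\<lambda>p::(nat \<Rightarrow> nat) \<times> (nat \<Rightarrow> nat). fst p j)" for j
    by (rule continuous_on_product_then_coordinatewise) (intro continuous_intros)
  have s: "continuous_on UNIV (\<lambda>p::(nat \<Rightarrow> nat) \<times> (nat \<Rightarrow> nat). snd p j)" for j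
    by (rule continuous_on_product_then_coordinatewise) (intro continuous_intros)
  show "continuous_on UNIV (\<lambda>p. interleave_pair p i)"
    by (cases "even i") (simp_all add: interleave_pair_def interleave_def f s)
qed

lemma borel_mgraph_branch_map: "mgraph cantor_space branch_map \<in> sets borel"
proof -
  have "interleave_pair \<in> borel_measurable borel"
    by (rule borel_measurable_continuous_onI[OF continuous_interleave_pair])
  from measurable_sets[OF this borel_interleaved_graph]
  have "interleave_pair -` interleaved_graph \<in> sets borel" by simp
  moreover have "interleave_pair -` interleaved_graph = mgraph cantor_space branch_map"
    by (auto simp: interleaved_graph_def interleave_pair_def mgraph_def)
  ultimately show ?thesis by simp
qed

theorem ex_multifun_cantor_baire:
  "\<exists>F :: (nat \<Rightarrow> nat) \<Rightarrow> (nat \<Rightarrow> nat) set.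
            multifun_on cantor_space UNIV F
          \<and> (\<forall>x\<in>cantor_space. closed (F x))
          \<and> mgraph cantor_space F \<in> sets borel
          \<and> analytic_set (mcontinuity_points baire_dist baire_dist cantor_space F)
          \<and> mcontinuity_points baire_dist baire_dist cantor_space F \<notin> sets borel"
proof (intro exI[of _ branch_map] conjI)
  show "multifun_on cantor_space UNIV branch_map" by (simp add: multifun_on_def branch_map_nonempty)
  show "\<forall>x\<in>cantor_space. closed (branch_map x)" by (simp add: closed_branch_map)
  show "mgraph cantor_space branch_map \<in> sets borel" by (rule borel_mgraph_branch_map)
  show "analytic_set (mcontinuity_points baire_dist baire_dist cantor_space branch_map)"
    unfolding mcontinuity_points_branch_map by (rule analytic_ill_founded)
  show "mcontinuity_points baire_dist baire_dist cantor_space branch_map \<notin> sets borel"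
    unfolding mcontinuity_points_branch_map by (rule ill_founded_not_borel)
qed

section \<open>A Cantor set in the unit interval\<close>

text \<open>Base-4 expansion with digits 0 and 2; the min keeps it meaningful on all of the Baire
  space, where it is continuous.\<close>

definition embed_term :: "(nat \<Rightarrow> nat) \<Rightarrow> nat \<Rightarrow> real" where
  "embed_term x i = 2 * real (min (x i) 1) / 4 ^ Suc i"

definition cantor_embed :: "(nat \<Rightarrow> nat) \<Rightarrow> real" where
  "cantor_embed x = suminf (embed_term x)"

definition embed_tail :: "nat \<Rightarrow> (nat \<Rightarrow> nat) \<Rightarrow> real" where
  "embed_tail n x = (\<Sum>j. embed_term x (j + n))"

lemma embed_term_nonneg: "0 \<le> embed_term x i" by (simp add: embed_term_def)

lemma embed_term_le:
  "embed_term x i \<le> 2 / 4 ^ Suc i" by (simp add: embed_term_def divide_right_mono)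

lemma sums_geometric_tail: "(\<lambda>j. 2 / 4 ^ Suc (j + n) :: real) sums (2 / (3 * 4 ^ n))"
proof -
  have "(\<lambda>j. (1/4::real) ^ j) sums (1 / (1 - 1/4))" by (rule geometric_sums) simp
  then have 1: "(\<lambda>j. (2 / 4 ^ Suc n) * (1/4::real) ^ j) sums ((2 / 4 ^ Suc n) * (1 / (1 - 1/4)))"
    by (rule sums_mult)
  have eqf: "(\<lambda>j. (2 / 4 ^ Suc n) * (1/4::real) ^ j) = (\<lambda>j. 2 / 4 ^ Suc (j + n))"
    by (auto simp: power_add power_divide field_simps)
  have eqv: "(2 / 4 ^ Suc n) * (1 / (1 - 1/4)) = (2 / (3 * 4 ^ n) :: real)"
    by (simp add: field_simps)
  show ?thesis using 1 unfolding eqf eqv .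
qed

lemma summable_embed_term_shift: "summable (\<lambda>j. embed_term x (j + n))"
  by (rule summable_comparison_test[OF _ sums_summable[OF sums_geometric_tail[of n]]])
     (auto intro!: exI[of _ 0] simp: embed_term_nonneg embed_term_le[of x "_ + n", simplified])

lemma summable_embed_term: "summable (embed_term x)"
  using summable_embed_term_shift[of x 0] by simp

lemma cantor_embed_split: "cantor_embed x = embed_tail n x + (\<Sum>j<n. embed_term x j)"
  unfolding cantor_embed_def embed_tail_def
    by (rule suminf_split_initial_segment[OF summable_embed_term])

lemma embed_tail_nonneg: "0 \<le> embed_tail n x"
  unfolding embed_tail_def
    by (intro suminf_nonneg summable_embed_term_shift) (simp add: embed_term_nonneg)

lemma embed_tail_le: "embed_tail n x \<le> 2 / (3 * 4 ^ n)"
proof -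
  have le: "\<And>j. embed_term x (j + n) \<le> 2 / 4 ^ Suc (j + n)" by (rule embed_term_le)
  have "embed_tail n x \<le> (\<Sum>j. 2 / 4 ^ Suc (j + n))"
    unfolding embed_tail_def
      by (rule suminf_le[OF le summable_embed_term_shift sums_summable[OF sums_geometric_tail]])
  then show ?thesis using sums_unique[OF sums_geometric_tail[of n]] by simp
qed

lemma embed_tail_Suc: "embed_tail n x = embed_term x n + embed_tail (Suc n) x"
proof -
  have "(\<Sum>j. embed_term x (Suc j + n)) = (\<Sum>j. embed_term x (j + n)) - embed_term x (0 + n)"
    by (rule suminf_split_head[OF summable_embed_term_shift])
  then show ?thesis by (simp add: embed_tail_def)
qed

lemma cantor_embed_dist_le:
  assumes "\<forall>i<n. x i = x' i" shows "\<bar>cantor_embed x - cantor_embed x'\<bar> \<le> 2 / (3 * 4 ^ n)"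
proof -
  have "(\<Sum>j<n. embed_term x j) = (\<Sum>j<n. embed_term x' j)" using assms
    by (intro sum.cong) (auto simp: embed_term_def)
  then have "cantor_embed x - cantor_embed x' = embed_tail n x - embed_tail n x'"
    by (simp add: cantor_embed_split[of x n] cantor_embed_split[of x' n])
  then show ?thesis
    using embed_tail_nonneg[of n x] embed_tail_le[of n x] embed_tail_nonneg[of n x'] embed_tail_le[of n x'] by simp
qed

lemma agree_if_cantor_embed_close:
  assumes x: "x \<in> cantor_space" and x': "x' \<in> cantor_space"
    and lt: "\<bar>cantor_embed x - cantor_embed x'\<bar> < 1 / (3 * 4 ^ N)" and i: "i \<le> N"
  shows "x i = x' i"
proof (rule ccontr)
  assume ne: "x i \<noteq> x' i"
  define L where "L = (LEAST i. x i \<noteq> x' i)"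
  have xL: "x L \<noteq> x' L" unfolding L_def using ne by (rule LeastI)
  have "L \<le> i" unfolding L_def using ne by (rule Least_le)
  have same: "\<forall>j<L. x j = x' j" unfolding L_def using not_less_Least by blast
  have "(\<Sum>j<L. embed_term x j) = (\<Sum>j<L. embed_term x' j)" using same
    by (intro sum.cong) (auto simp: embed_term_def)
  then have eq: "cantor_embed x - cantor_embed x' =
      (embed_term x L - embed_term x' L) + (embed_tail (Suc L) x - embed_tail (Suc L) x')"
    using cantor_embed_split[of x L] cantor_embed_split[of x' L] embed_tail_Suc[of L x]
      embed_tail_Suc[of L x'] by linarith
  define a :: real where "a = 4 ^ L"
  have a: "a > 0" by (simp add: a_def)
  have p4: "(4::real) ^ Suc L = 4 * a" by (simp add: a_def)
  have tmv: "embed_term z L = (if z L = 0 then 0 else 2 / (4 * a))" if "z \<in> cantor_space" for z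
  proof -
    have "z L = 0 \<or> z L = 1" using that by (auto simp: cantor_space_def)
    then show ?thesis unfolding embed_term_def p4 by auto
  qed
  have "x L = 0 \<or> x L = 1" "x' L = 0 \<or> x' L = 1" using x x' by (auto simp: cantor_space_def)
  then have d1: "\<bar>embed_term x L - embed_term x' L\<bar> = 2 / (4 * a)"
    using xL tmv[OF x] tmv[OF x'] a by auto
  have d2: "\<bar>embed_tail (Suc L) x - embed_tail (Suc L) x'\<bar> \<le> 2 / (3 * (4 * a))"
  proof -
    have "embed_tail (Suc L) x \<le> 2 / (3 * (4 * a))" "embed_tail (Suc L) x' \<le> 2 / (3 * (4 * a))"
      using embed_tail_le[of "Suc L" x] embed_tail_le[of "Suc L" x'] unfolding p4 by auto
    then show ?thesis using embed_tail_nonneg[of "Suc L" x] embed_tail_nonneg[of "Suc L" x']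
      by linarith
  qed
  have "\<bar>cantor_embed x - cantor_embed x'\<bar> \<ge> 2 / (4 * a) - 2 / (3 * (4 * a))" using eq d1 d2
    by linarith
  also have "2 / (4 * a) - 2 / (3 * (4 * a)) = 1 / (3 * a)" using a by (simp add: field_simps)
  finally have ge: "\<bar>cantor_embed x - cantor_embed x'\<bar> \<ge> 1 / (3 * a)" .
  have "a \<le> 4 ^ N" unfolding a_def using \<open>L \<le> i\<close> i by (intro power_increasing) auto
  then have "1 / (3 * 4 ^ N) \<le> 1 / (3 * a)" using a by (intro divide_left_mono) auto
  then show False using lt ge by linarith
qed

lemma ex_geometric_tail_less: "(e::real) > 0 \<Longrightarrow> \<exists>n. 2 / (3 * 4 ^ n) < e"
proof -
  assume e: "e > 0"
  obtain n where n: "1 / (real n + 1) < e" using ex_inverse_Suc_less[OF e] by blast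
  have "Suc n \<le> 2 ^ n" by (rule Suc_leI[OF less_exp])
  also have "(2::nat) ^ n \<le> 4 ^ n" by (rule power_mono) auto
  finally have "real (Suc n) \<le> real ((4::nat) ^ n)" by (simp only: of_nat_le_iff)
  then have "real n + 1 \<le> 4 ^ n" by simp
  then have "2 / (3 * 4 ^ n) \<le> 2 / (3 * (real n + 1))" by (intro divide_left_mono) auto
  also have "\<dots> < 1 / (real n + 1)" by (simp add: field_simps)
  finally have "2 / (3 * 4 ^ n) < 1 / (real n + 1)" .
  then show ?thesis using n by (intro exI[of _ n]) linarith
qed

lemma continuous_cantor_embed: "continuous_on UNIV cantor_embed"
proof (rule continuous_on_cylinder_metricI)
  fix x and e :: real assume "e > 0"
  then obtain n where n: "2 / (3 * 4 ^ n) < e" using ex_geometric_tail_less by blast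
  have "\<forall>z\<in>UNIV. z \<in> cylinder x n \<longrightarrow> dist (cantor_embed z) (cantor_embed x) < e"
  proof (intro ballI impI)
    fix z assume "z \<in> cylinder x n"
    then have "\<bar>cantor_embed z - cantor_embed x\<bar> \<le> 2 / (3 * 4 ^ n)"
      by (intro cantor_embed_dist_le) (simp add: cylinder_def)
    then show "dist (cantor_embed z) (cantor_embed x) < e" using n by (simp add: dist_real_def)
  qed
  then show "\<exists>N. \<forall>z\<in>UNIV. z \<in> cylinder x N \<longrightarrow> dist (cantor_embed z) (cantor_embed x) < e" by blast
qed

lemma cantor_embed_bounds: "0 \<le> cantor_embed x \<and> cantor_embed x \<le> 2 / 3"
  using cantor_embed_split[of x 0] embed_tail_nonneg[of 0 x] embed_tail_le[of 0 x] by simp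

lemma cantor_embed_in_unit: "cantor_embed x \<in> {0..1}" using cantor_embed_bounds[of x] by auto

text \<open>The i-th base-4 digit of a point of the Cantor image is 2 exactly when the
  fractional part of 4^i r is at least 1/2.\<close>

definition cantor_decode :: "real \<Rightarrow> nat \<Rightarrow> nat" where
  "cantor_decode r = (\<lambda>i. if 1/2 \<le> frac (4 ^ i * r) then 1 else 0)"

lemma cantor_decode_in_cantor:
  "cantor_decode r \<in> cantor_space" by (simp add: cantor_decode_def cantor_space_def)

lemma pow4_embed_initial_sum:
  "(4::real) ^ i * (\<Sum>j<i. embed_term x j) = real (\<Sum>j<i. 2 * min (x j) 1 * 4 ^ (i - Suc j))"
proof -
  have "(4::real) ^ i * embed_term x j = real (2 * min (x j) 1 * 4 ^ (i - Suc j))" if "j < i" for j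
  proof -
    have "(i - Suc j) + Suc j = i" using that by simp
    then have "(4::real) ^ i = 4 ^ (i - Suc j) * 4 ^ Suc j" by (metis power_add)
    then show ?thesis by (simp add: embed_term_def)
  qed
  then show ?thesis by (simp add: sum_distrib_left)
qed

lemma pow4_embed_tail_le: "(4::real) ^ i * embed_tail (Suc i) x \<le> 1 / 6"
proof -
  have "(4::real) ^ i * embed_tail (Suc i) x \<le> 4 ^ i * (2 / (3 * 4 ^ Suc i))"
    by (intro mult_left_mono[OF embed_tail_le]) simp
  also have "\<dots> = 1 / 6" by (simp add: field_simps)
  finally show ?thesis .
qed

lemma cantor_decode_embed:
  assumes x: "x \<in> cantor_space" shows "cantor_decode (cantor_embed x) = x"
proof
  fix i
  have x01: "x i = 0 \<or> x i = 1" using x by (simp add: cantor_space_def)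
  define T where "T = (4::real) ^ i * embed_tail (Suc i) x"
  have T: "0 \<le> T" "T \<le> 1 / 6" using embed_tail_nonneg pow4_embed_tail_le by (simp_all add: T_def)
  define A where "A = (\<Sum>j<i. 2 * min (x j) 1 * 4 ^ (i - Suc j))"
  have "(4::real) ^ i * embed_term x i = real (x i) / 2" using x01 by (auto simp: embed_term_def)
  then have "4 ^ i * cantor_embed x = real A + (real (x i) / 2 + T)"
    using cantor_embed_split[of x i] embed_tail_Suc[of i x] pow4_embed_initial_sum[of i x, folded A_def]
    by (simp add: T_def algebra_simps)
  moreover have "real (x i) / 2 + T < 1" "0 \<le> real (x i) / 2 + T" using x01 T by auto
  ultimately have "frac (4 ^ i * cantor_embed x) = real (x i) / 2 + T"
    by (simp add: frac_def floor_eq_iff)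
  then show "cantor_decode (cantor_embed x) i = x i" using x01 T by (auto simp: cantor_decode_def)
qed

lemma inj_on_cantor_embed: "inj_on cantor_embed cantor_space"
  by (metis cantor_decode_embed inj_onI)

lemma borel_measurable_frac: "(\<lambda>r::real. frac r) \<in> borel_measurable borel"
proof -
  have "(\<lambda>r::real. r - real_of_int \<lfloor>r\<rfloor>) \<in> borel_measurable borel"
    by (intro borel_measurable_diff borel_measurable_real_floor) simp
  then show ?thesis by (simp add: frac_def)
qed

lemma cantor_decode_measurable: "cantor_decode \<in> borel_measurable borel"
proof (rule measurable_coordinatewise_then_product)
  fix i
  have f: "(\<lambda>r::real. frac (4 ^ i * r)) \<in> borel_measurable borel"
    using measurable_compose[OF _ borel_measurable_frac, of "\<lambda>r. 4 ^ i * r"] by simp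
  have "{r::real. 1/2 \<le> frac (4 ^ i * r)} \<in> sets borel"
    using f by measurable
  then have m: "(\<lambda>r. if r \<in> {r::real. 1/2 \<le> frac (4 ^ i * r)} then (1::nat) else 0) \<in> borel_measurable borel"
    by (intro measurable_If_set) auto
  have eq: "(\<lambda>r. cantor_decode r i) = (\<lambda>r. if r \<in> {r::real. 1/2 \<le> frac (4 ^ i * r)} then 1 else 0)"
    by (simp add: cantor_decode_def fun_eq_iff)
  show "(\<lambda>r. cantor_decode r i) \<in> borel_measurable borel" unfolding eq by (rule m)
qed

lemma closed_cantor_space: "closed cantor_space"
proof -
  have "closed {z::nat\<Rightarrow>nat. z i \<in> {0,1}}" for i
    by (rule locally_constant_clopen(1)) (rule exI[of _ "Suc i"], simp add: cylinder_def)
  then have "closed (\<Inter>i. {z::nat\<Rightarrow>nat. z i \<in> {0,1}})" by (intro closed_INT) blast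
  moreover have "cantor_space = (\<Inter>i. {z::nat\<Rightarrow>nat. z i \<in> {0,1}})"
    by (auto simp: cantor_space_def)
  ultimately show ?thesis by simp
qed

lemma compact_cantor_space: "compact cantor_space"
proof -
  have eq: "cantor_space = PiE UNIV (\<lambda>_. {0,1::nat})"
  proof (rule set_eqI)
    fix x :: "nat \<Rightarrow> nat" show "x \<in> cantor_space \<longleftrightarrow> x \<in> PiE UNIV (\<lambda>_. {0,1::nat})"
      by (simp add: cantor_space_def PiE_iff)
  qed
  moreover have "compactin (product_topology (\<lambda>i. euclidean) UNIV) (PiE UNIV (\<lambda>_. {0,1::nat}))"
    by (subst compactin_PiE) (auto simp: compactin_euclidean_iff)
  then have "compact (PiE UNIV (\<lambda>_. {0,1::nat}))"
    by (simp add: euclidean_product_topology compactin_euclidean_iff)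
  then show ?thesis by (subst eq)
qed

definition cantor_image :: "real set" where "cantor_image = cantor_embed ` cantor_space"

lemma cantor_embed_in_cantor_image: "x \<in> cantor_space \<Longrightarrow> cantor_embed x \<in> cantor_image"
  by (simp add: cantor_image_def)

lemma compact_cantor_image: "compact cantor_image"
  unfolding cantor_image_def
    using continuous_on_subset[OF continuous_cantor_embed] compact_cantor_space
    by (rule compact_continuous_image) simp

lemma closed_cantor_image:
  "closed cantor_image" using compact_cantor_image by (rule compact_imp_closed)

lemma cantor_image_bounds: "r \<in> cantor_image \<Longrightarrow> 0 \<le> r \<and> r \<le> 2/3"
  using cantor_embed_bounds by (auto simp: cantor_image_def)

lemma zero_in_cantor_image: "0 \<in> cantor_image"
proof -
  have "embed_term (\<lambda>_. 0) = (\<lambda>_. 0)" by (auto simp: fun_eq_iff embed_term_def)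
  then have "cantor_embed (\<lambda>_. 0) = 0" by (simp add: cantor_embed_def)
  then show ?thesis unfolding cantor_image_def
    by (intro image_eqI[of _ _ "\<lambda>_. 0"]) (auto simp: cantor_space_def)
qed

lemma half_in_cantor_image: "1/2 \<in> cantor_image"
proof -
  define x :: "nat \<Rightarrow> nat" where "x i = (if i = 0 then 1 else 0)" for i
  have "embed_term x = (\<lambda>i. if i = 0 then (\<lambda>_. 1/2) i else 0)"
    by (auto simp: embed_term_def x_def fun_eq_iff)
  then have "embed_term x sums (1/2)" using sums_single[of 0 "\<lambda>_. 1/2::real"] by simp
  then have "cantor_embed x = 1/2" unfolding cantor_embed_def by (rule sums_unique[symmetric])
  then show ?thesis unfolding cantor_image_def
    by (intro image_eqI[of _ _ x]) (auto simp: cantor_space_def x_def)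
qed

lemma cantor_image_nonempty: "cantor_image \<noteq> {}" using zero_in_cantor_image by auto

definition gap_dist :: "real \<Rightarrow> real" where "gap_dist r = infdist r cantor_image"

lemma gap_dist_pos: "r \<notin> cantor_image \<Longrightarrow> 0 < gap_dist r"
  unfolding gap_dist_def using closed_cantor_image cantor_image_nonempty
    by (rule infdist_pos_not_in_closed)

lemma gap_dist_le_half: "0 \<le> r \<Longrightarrow> r \<le> 1 \<Longrightarrow> gap_dist r \<le> 1/2"
proof -
  assume r: "0 \<le> r" "r \<le> 1"
  show ?thesis
  proof (cases "r \<le> 1/2")
    case True
    have "gap_dist r \<le> dist r 0" unfolding gap_dist_def using zero_in_cantor_image
      by (rule infdist_le)
    then show ?thesis using True r by (simp add: dist_real_def)
  next
    case False
    have "gap_dist r \<le> dist r (1/2)" unfolding gap_dist_def using half_in_cantor_image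
      by (rule infdist_le)
    then show ?thesis using False r by (simp add: dist_real_def)
  qed
qed

lemma gap_dist_le: "y \<in> cantor_image \<Longrightarrow> gap_dist r \<le> \<bar>r - y\<bar>"
  unfolding gap_dist_def using infdist_le[of y cantor_image r] by (simp add: dist_real_def)

lemma continuous_gap_dist: "continuous_on UNIV gap_dist"
  unfolding gap_dist_def by (intro continuous_intros)

text \<open>Composed with cantor_embed, this embeds the Baire space into the Cantor image.\<close>

definition graph_indicator :: "(nat \<Rightarrow> nat) \<Rightarrow> nat \<Rightarrow> nat" where
  "graph_indicator y = (\<lambda>i. if y (fst (prod_decode i)) = snd (prod_decode i) then 1 else 0)"

lemma graph_indicator_in_cantor:
  "graph_indicator y \<in> cantor_space" by (simp add: graph_indicator_def cantor_space_def)

lemma graph_indicator_pair: "graph_indicator y (prod_encode (k, j)) = (if y k = j then 1 else 0)"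
  by (simp add: graph_indicator_def)

lemma graph_indicator_agree:
  assumes "\<forall>k<M. y k = y' k" "i < M" shows "graph_indicator y i = graph_indicator y' i"
proof -
  obtain k j where kj: "prod_decode i = (k, j)" by (cases "prod_decode i")
  have "k \<le> prod_encode (k, j)" by (rule le_prod_encode_1)
  also have "prod_encode (k, j) = i" using prod_decode_inverse[of i] kj by simp
  finally have "k < M" using assms(2) by simp
  then show ?thesis using assms(1) kj by (simp add: graph_indicator_def)
qed

definition baire_embed :: "(nat \<Rightarrow> nat) \<Rightarrow> real" where "baire_embed y = cantor_embed (graph_indicator y)"

lemma baire_embed_in_cantor_image:
  "baire_embed y \<in> cantor_image" unfolding baire_embed_def cantor_image_def
    using graph_indicator_in_cantor by blast

section \<open>Continuity points of a multi-valued function on the unit interval\<close>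

text \<open>Over the Cantor image the branch map is transported by the two embeddings. Off it, with
  d the distance to the image, the values are the points of [0,1] where sin (pi w / d) is at most
  -1/2 or at least 1/2, according to whether r is rational. Both sets meet every interval of length
  2d, which preserves continuity at the image, but they lie far apart, which destroys continuity
  off it.\<close>

definition branch_map_real :: "real \<Rightarrow> real set" where
  "branch_map_real r = (if r \<in> cantor_image then baire_embed ` branch_map (cantor_decode r)
           else if r \<in> \<rat> then {w \<in> {0..1}. sin (pi * w / gap_dist r) \<le> -1/2}
           else {w \<in> {0..1}. 1/2 \<le> sin (pi * w / gap_dist r)})"

lemma branch_map_real_cantor_embed:
  "x \<in> cantor_space \<Longrightarrow> branch_map_real (cantor_embed x) = baire_embed ` branch_map x"
  using cantor_decode_embed by (auto simp: branch_map_real_def cantor_image_def)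

lemma ex_sin_value_within_period:
  assumes d: "0 < d"
  shows "\<exists>w. w0 \<le> w \<and> w \<le> w0 + 2 * d \<and> sin (pi * w / d) = sin (pi * c)"
proof -
  define k where "k = \<lceil>(w0 / d - c) / 2\<rceil>"
  have k: "(w0 / d - c) / 2 \<le> real_of_int k" "real_of_int k < (w0 / d - c) / 2 + 1"
    unfolding k_def by linarith+
  define w where "w = d * (2 * real_of_int k + c)"
  have "w0 \<le> w" "w \<le> w0 + 2 * d" using d k by (simp_all add: w_def field_simps)
  moreover have "pi * w / d = 2 * pi * real_of_int k + pi * c" using d
    by (simp add: w_def field_simps)
  then have "sin (pi * w / d) = sin (pi * c)" by (simp add: sin_add)
  ultimately show ?thesis by blast
qed

lemma ex_sin_le_neg_half: "0 < d \<Longrightarrow> \<exists>w. w0 \<le> w \<and> w \<le> w0 + 2 * d \<and> sin (pi * w / d) \<le> -1/2"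
proof -
  have "sin (pi * (3/2)) = sin (pi + pi / 2)" by (simp add: field_simps)
  also have "\<dots> = - 1" by (simp only: sin_periodic_pi2 sin_pi_half)
  finally show "0 < d \<Longrightarrow> ?thesis" using ex_sin_value_within_period[of d w0 "3/2"] by auto
qed

lemma ex_sin_ge_half: "0 < d \<Longrightarrow> \<exists>w. w0 \<le> w \<and> w \<le> w0 + 2 * d \<and> 1/2 \<le> sin (pi * w / d)"
  using ex_sin_value_within_period[of d w0 "1/2"] by auto

lemma baire_embed_bounds: "0 \<le> baire_embed y \<and> baire_embed y \<le> 2/3"
  using cantor_image_bounds[OF baire_embed_in_cantor_image[of y]] by linarith

lemma baire_embed_dist_le:
  "\<forall>k<n. y k = y' k \<Longrightarrow> \<bar>baire_embed y - baire_embed y'\<bar> \<le> 2 / (3 * 4 ^ n)"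
  unfolding baire_embed_def using graph_indicator_agree by (intro cantor_embed_dist_le) blast

lemma agree_if_baire_embed_close:
  assumes "\<bar>baire_embed y - baire_embed y'\<bar> < 1 / (3 * 4 ^ M)" and "prod_encode (k, y k) \<le> M"
  shows "y k = y' k"
proof -
  have "graph_indicator y (prod_encode (k, y k)) = graph_indicator y' (prod_encode (k, y k))"
    using agree_if_cantor_embed_close[OF graph_indicator_in_cantor graph_indicator_in_cantor] assms
    unfolding baire_embed_def by blast
  then show ?thesis by (simp add: graph_indicator_pair split: if_splits)
qed

lemma baire_dist_less_if_cantor_embed_close:
  assumes "x \<in> cantor_space" "x' \<in> cantor_space"
    and "\<bar>cantor_embed x - cantor_embed x'\<bar> < 1 / (3 * 4 ^ N)"
  shows "baire_dist x x' < 1 / (real N + 1)"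
  using agree_if_cantor_embed_close[OF assms] by (intro baire_dist_less_if_agree) blast

lemma branch_map_real_subset: "branch_map_real r \<subseteq> {0..1}"
proof -
  have "0 \<le> baire_embed y \<and> baire_embed y \<le> 1" for y using baire_embed_bounds[of y] by linarith
  then show ?thesis by (auto simp: branch_map_real_def)
qed

lemma ex_branch_map_real_near:
  assumes r: "r \<notin> cantor_image" and "0 \<le> w0" "w0 + 2 * gap_dist r \<le> 1"
  shows "\<exists>w\<in>branch_map_real r. w0 \<le> w \<and> w \<le> w0 + 2 * gap_dist r"
proof (cases "r \<in> \<rat>")
  case True
  obtain w where "w0 \<le> w" "w \<le> w0 + 2 * gap_dist r" "sin (pi * w / gap_dist r) \<le> -1/2"
    using ex_sin_le_neg_half[OF gap_dist_pos[OF r]] by blast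
  with True r assms show ?thesis by (intro bexI[of _ w]) (auto simp: branch_map_real_def)
next
  case False
  obtain w where "w0 \<le> w" "w \<le> w0 + 2 * gap_dist r" "1/2 \<le> sin (pi * w / gap_dist r)"
    using ex_sin_ge_half[OF gap_dist_pos[OF r]] by blast
  with False r assms show ?thesis by (intro bexI[of _ w]) (auto simp: branch_map_real_def)
qed

lemma branch_map_real_nonempty:
  assumes "r \<in> {0..1}" shows "branch_map_real r \<noteq> {}"
proof (cases "r \<in> cantor_image")
  case True then show ?thesis using branch_map_nonempty by (simp add: branch_map_real_def)
next
  case False
  then show ?thesis using ex_branch_map_real_near[OF False, of 0] gap_dist_le_half[of r] assms
    by auto
qed

lemma ex_irrational_between: "(a::real) < b \<Longrightarrow> \<exists>t. a < t \<and> t < b \<and> t \<notin> \<rat>"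
proof (rule ccontr)
  assume ab: "a < b" and "\<not> (\<exists>t. a < t \<and> t < b \<and> t \<notin> \<rat>)"
  then have "{a<..<b} \<subseteq> \<rat>" by auto
  then have "countable {a<..<b}" using countable_rat countable_subset by blast
  with ab show False using uncountable_open_interval by blast
qed

lemma ex_near_opposite_rationality:
  assumes r: "r \<in> {0..1}" "r \<notin> cantor_image" and e: "0 < e"
  shows "\<exists>x'. x' \<in> {0..1} \<and> \<bar>r - x'\<bar> < e \<and> x' \<notin> cantor_image \<and> (x' \<in> \<rat> \<longleftrightarrow> r \<notin> \<rat>)"
proof -
  define \<rho> where "\<rho> = min e (gap_dist r)"
  have \<rho>: "0 < \<rho>" "\<rho> \<le> e" "\<rho> \<le> gap_dist r" "\<rho> \<le> 1/2"
  proof -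
    have "gap_dist r \<le> 1/2" using r(1) by (intro gap_dist_le_half) auto
    then show "0 < \<rho>" "\<rho> \<le> e" "\<rho> \<le> gap_dist r" "\<rho> \<le> 1/2"
      using e gap_dist_pos[OF r(2)] by (auto simp: \<rho>_def)
  qed
  obtain a b where ab: "a < b" "0 \<le> a" "b \<le> 1" "r - \<rho> \<le> a" "b \<le> r + \<rho>"
  proof (cases "r \<le> 1/2")
    case True then show ?thesis using that[of r "r + \<rho>"] \<rho> r(1) by auto
  next
    case False then show ?thesis using that[of "r - \<rho>" r] \<rho> r(1) by auto
  qed
  obtain x' where x': "a < x'" "x' < b" "x' \<in> \<rat> \<longleftrightarrow> r \<notin> \<rat>"
  proof (cases "r \<in> \<rat>")
    case True then show ?thesis using ex_irrational_between[OF ab(1)] that by blast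
  next
    case False then show ?thesis using Rats_dense_in_real[OF ab(1)] that by blast
  qed
  have close: "\<bar>r - x'\<bar> < \<rho>"
  proof -
    have "\<bar>r - x'\<bar> \<le> \<rho>" using x' ab by linarith
    moreover have "x' \<noteq> r - \<rho>" "x' \<noteq> r + \<rho>" using x' ab by auto
    ultimately show ?thesis using x' ab by linarith
  qed
  have "x' \<notin> cantor_image"
  proof
    assume "x' \<in> cantor_image"
    then have "gap_dist r \<le> \<bar>r - x'\<bar>" by (rule gap_dist_le)
    with close \<rho> show False by linarith
  qed
  moreover have "x' \<in> {0..1}" using x' ab by auto
  ultimately show ?thesis using close \<rho> x'(3) by (intro exI[of _ x']) auto
qed

lemma dist_Pair_le: "dist (a, b) (c, d) \<le> dist a c + dist b d"
  by (simp add: dist_Pair_Pair sqrt_sum_squares_le_sum)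

lemma not_mcontinuous_at_off_cantor_image:
  assumes r: "r \<in> {0..1}" "r \<notin> cantor_image"
  shows "\<not> mcontinuous_at dist dist {0..1} branch_map_real r"
proof
  assume "mcontinuous_at dist dist {0..1} branch_map_real r"
  then obtain y where y: "y \<in> branch_map_real r"
    and yc: "\<And>e. e > 0 \<Longrightarrow> \<exists>\<delta>>0. \<forall>x'\<in>{0..1}. dist r x' < \<delta> \<longrightarrow> (\<exists>y'\<in>branch_map_real x'. dist y y' < e)"
    unfolding mcontinuous_at_def by blast
  define \<phi> where "\<phi> = (\<lambda>p::real \<times> real. sin (pi * fst p / gap_dist (snd p)))"
  have dpos: "gap_dist r \<noteq> 0" using gap_dist_pos[OF r(2)] by simp
  have "isCont gap_dist r" using continuous_gap_dist by (simp add: continuous_on_eq_continuous_at)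
  then have "isCont (\<lambda>p::real \<times> real. gap_dist (snd p)) (y, r)"
    by (intro continuous_at_compose[of "(y,r)" snd gap_dist, unfolded o_def]) (auto intro: continuous_intros)
  then have cont: "isCont \<phi> (y, r)" unfolding \<phi>_def using dpos
    by (intro continuous_intros) auto
  obtain \<eta> where eta: "\<eta> > 0" "\<And>p. dist p (y, r) < \<eta> \<Longrightarrow> dist (\<phi> p) (\<phi> (y, r)) < 1/2"
    using cont[unfolded continuous_at_eps_delta] by (meson zero_less_divide_1_iff zero_less_numeral)
  obtain \<delta> where dl: "\<delta> > 0" "\<forall>x'\<in>{0..1}. dist r x' < \<delta> \<longrightarrow> (\<exists>y'\<in>branch_map_real x'. dist y y' < \<eta>/2)"
    using yc[of "\<eta>/2"] eta(1) by auto
  obtain x' where x': "x' \<in> {0..1}" "\<bar>r - x'\<bar> < min \<delta> (\<eta>/2)" "x' \<notin> cantor_image" "x' \<in> \<rat> \<longleftrightarrow> r \<notin> \<rat>"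
    using ex_near_opposite_rationality[OF r, of "min \<delta> (\<eta>/2)"] dl(1) eta(1) by auto
  have "dist r x' < \<delta>" using x'(2) by (simp add: dist_real_def)
  then obtain y' where y': "y' \<in> branch_map_real x'" "dist y y' < \<eta>/2" using dl(2) x'(1) by blast
  have "dist (y', x') (y, r) \<le> dist y' y + dist x' r" by (rule dist_Pair_le)
  also have "\<dots> < \<eta>" using y'(2) x'(2) by (simp add: dist_real_def abs_minus_commute)
  finally have near: "\<bar>\<phi> (y', x') - \<phi> (y, r)\<bar> < 1/2" using eta(2) by (simp add: dist_real_def)
  show False
  proof (cases "r \<in> \<rat>")
    case True
    then have "\<phi> (y, r) \<le> -1/2" using y r(2) by (simp add: branch_map_real_def \<phi>_def)
    moreover have "1/2 \<le> \<phi> (y', x')" using y'(1) x'(3,4) True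
      by (simp add: branch_map_real_def \<phi>_def)
    ultimately show False using near by linarith
  next
    case False
    then have "1/2 \<le> \<phi> (y, r)" using y r(2) by (simp add: branch_map_real_def \<phi>_def)
    moreover have "\<phi> (y', x') \<le> -1/2" using y'(1) x'(3,4) False
      by (simp add: branch_map_real_def \<phi>_def)
    ultimately show False using near by linarith
  qed
qed

lemma mcontinuous_at_branch_map_real_if:
  assumes x: "x \<in> cantor_space" and cont: "mcontinuous_at baire_dist baire_dist cantor_space branch_map x"
  shows "mcontinuous_at dist dist {0..1} branch_map_real (cantor_embed x)"
proof -
  obtain y0 where y0: "y0 \<in> branch_map x" and y0_cont: "\<And>e. e > 0 \<Longrightarrow> \<exists>\<delta>>0. \<forall>x'\<in>cantor_space.
      baire_dist x x' < \<delta> \<longrightarrow> (\<exists>y'\<in>branch_map x'. baire_dist y0 y' < e)"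
    using cont unfolding mcontinuous_at_def by blast
  have "\<exists>\<delta>>0. \<forall>r\<in>{0..1}. dist (cantor_embed x) r < \<delta> \<longrightarrow>
          (\<exists>w\<in>branch_map_real r. dist (baire_embed y0) w < e)" if e: "e > 0" for e
  proof -
    obtain n where n: "2 / (3 * 4 ^ n) < e" using ex_geometric_tail_less[OF e] by blast
    obtain \<delta>b where \<delta>b: "\<delta>b > 0" "\<forall>x'\<in>cantor_space. baire_dist x x' < \<delta>b \<longrightarrow>
        (\<exists>y'\<in>branch_map x'. baire_dist y0 y' < 1 / (real n + 1))"
      using y0_cont[of "1 / (real n + 1)"] by auto
    obtain N where N: "1 / (real N + 1) < \<delta>b" using ex_inverse_Suc_less[OF \<delta>b(1)] by blast
    define \<delta> where "\<delta> = min (1 / (3 * 4 ^ N)) (min (e/2) (1/6))"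
    have \<delta>: "\<delta> > 0" "\<delta> \<le> 1 / (3 * 4 ^ N)" "\<delta> \<le> e/2" "\<delta> \<le> 1/6" using e by (auto simp: \<delta>_def)
    have "\<exists>w\<in>branch_map_real r. dist (baire_embed y0) w < e" if r: "dist (cantor_embed x) r < \<delta>" for r
    proof (cases "r \<in> cantor_image")
      case True
      then obtain x' where x': "x' \<in> cantor_space" "r = cantor_embed x'"
        by (auto simp: cantor_image_def)
      have "baire_dist x x' < 1 / (real N + 1)"
        using r x' \<delta>
          by (intro baire_dist_less_if_cantor_embed_close[OF x x'(1)]) (simp add: dist_real_def)
      then obtain y' where y': "y' \<in> branch_map x'" "baire_dist y0 y' < 1 / (real n + 1)"
        using \<delta>b(2) x'(1) N by fastforce
      have "\<bar>baire_embed y0 - baire_embed y'\<bar> \<le> 2 / (3 * 4 ^ n)"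
        using agree_if_baire_dist_less[OF y'(2)] by (intro baire_embed_dist_le) simp
      moreover have "baire_embed y' \<in> branch_map_real r"
        using y'(1) branch_map_real_cantor_embed[OF x'(1)] x'(2) by simp
      ultimately show ?thesis using n
        by (intro bexI[of _ "baire_embed y'"]) (auto simp: dist_real_def)
    next
      case False
      have gap: "gap_dist r < \<delta>"
        using gap_dist_le[OF cantor_embed_in_cantor_image[OF x], of r] r
        by (simp add: dist_real_def abs_minus_commute)
      obtain w where "w \<in> branch_map_real r" "baire_embed y0 \<le> w" "w \<le> baire_embed y0 + 2 * gap_dist r"
        using ex_branch_map_real_near[OF False, of "baire_embed y0"] baire_embed_bounds[of y0] gap \<delta>
        by auto
      with gap \<delta> show ?thesis by (intro bexI[of _ w]) (auto simp: dist_real_def)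
    qed
    with \<delta>(1) show ?thesis by blast
  qed
  moreover have "baire_embed y0 \<in> branch_map_real (cantor_embed x)"
    using y0 branch_map_real_cantor_embed[OF x] by simp
  ultimately show ?thesis unfolding mcontinuous_at_def by blast
qed

lemma mcontinuous_at_branch_map_if_real:
  assumes x: "x \<in> cantor_space" and cont: "mcontinuous_at dist dist {0..1} branch_map_real (cantor_embed x)"
  shows "mcontinuous_at baire_dist baire_dist cantor_space branch_map x"
proof -
  obtain w0 where w0: "w0 \<in> branch_map_real (cantor_embed x)" and w0_cont: "\<And>e. e > 0 \<Longrightarrow> \<exists>\<delta>>0.
      \<forall>r\<in>{0..1}. dist (cantor_embed x) r < \<delta> \<longrightarrow> (\<exists>w'\<in>branch_map_real r. dist w0 w' < e)"
    using cont unfolding mcontinuous_at_def by blast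
  then obtain y0 where y0: "y0 \<in> branch_map x" "w0 = baire_embed y0"
    using branch_map_real_cantor_embed[OF x] by auto
  have "\<exists>\<delta>>0. \<forall>x'\<in>cantor_space. baire_dist x x' < \<delta> \<longrightarrow> (\<exists>y'\<in>branch_map x'. baire_dist y0 y' < e)"
    if e: "e > 0" for e
  proof -
    obtain m where m: "1 / (real m + 1) < e" using ex_inverse_Suc_less[OF e] by blast
    define M where "M = Max ((\<lambda>k. prod_encode (k, y0 k)) ` {..m})"
    have code_le_M: "prod_encode (k, y0 k) \<le> M" if "k \<le> m" for k
      unfolding M_def using that by (intro Max_ge) auto
    obtain \<delta>r where \<delta>r: "\<delta>r > 0" "\<forall>r\<in>{0..1}. dist (cantor_embed x) r < \<delta>r \<longrightarrow>
        (\<exists>w'\<in>branch_map_real r. dist w0 w' < 1 / (3 * 4 ^ M))"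
      using w0_cont[of "1 / (3 * 4 ^ M)"] by auto
    obtain n where n: "2 / (3 * 4 ^ n) < \<delta>r" using ex_geometric_tail_less[OF \<delta>r(1)] by blast
    have "\<exists>y'\<in>branch_map x'. baire_dist y0 y' < e"
      if x': "x' \<in> cantor_space" "baire_dist x x' < 1 / (real n + 1)" for x'
    proof -
      have "\<bar>cantor_embed x - cantor_embed x'\<bar> \<le> 2 / (3 * 4 ^ n)"
        using agree_if_baire_dist_less[OF x'(2)] by (intro cantor_embed_dist_le) simp
      then have "dist (cantor_embed x) (cantor_embed x') < \<delta>r" using n by (simp add: dist_real_def)
      then obtain w' where w': "w' \<in> branch_map_real (cantor_embed x')" "dist w0 w' < 1 / (3 * 4 ^ M)"
        using \<delta>r(2) cantor_embed_in_unit by blast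
      then obtain y' where y': "y' \<in> branch_map x'" "w' = baire_embed y'"
        using branch_map_real_cantor_embed[OF x'(1)] by auto
      have "\<forall>k\<le>m. y0 k = y' k"
        using agree_if_baire_embed_close[of y0 y' M] w'(2) y0(2) y'(2) code_le_M
        by (simp add: dist_real_def)
      then have "baire_dist y0 y' < 1 / (real m + 1)" by (rule baire_dist_less_if_agree)
      with y'(1) m show ?thesis by (intro bexI[of _ y']) auto
    qed
    then show ?thesis by (intro exI[of _ "1 / (real n + 1)"]) auto
  qed
  then show ?thesis unfolding mcontinuous_at_def using y0(1) by blast
qed

lemma mcontinuity_points_branch_map_real:
  "mcontinuity_points dist dist {0..1} branch_map_real = cantor_embed ` ill_founded_trees"
proof (intro set_eqI iffI)
  fix r assume "r \<in> mcontinuity_points dist dist {0..1} branch_map_real"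
  then have r: "r \<in> {0..1}" "mcontinuous_at dist dist {0..1} branch_map_real r"
    by (auto simp: mcontinuity_points_def)
  then have "r \<in> cantor_image" using not_mcontinuous_at_off_cantor_image by blast
  then obtain x where x: "x \<in> cantor_space" "r = cantor_embed x" by (auto simp: cantor_image_def)
  then have "ill_founded x"
    using mcontinuous_at_branch_map_if_real[OF x(1)] r(2) mcontinuous_at_branch_map_iff[OF x(1)]
      by simp
  then show "r \<in> cantor_embed ` ill_founded_trees" using x by blast
next
  fix r assume "r \<in> cantor_embed ` ill_founded_trees"
  then obtain x where x: "x \<in> cantor_space" "ill_founded x" "r = cantor_embed x" by blast
  then have "mcontinuous_at dist dist {0..1} branch_map_real r"
    using mcontinuous_at_branch_map_real_if mcontinuous_at_branch_map_iff by simp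
  then show "r \<in> mcontinuity_points dist dist {0..1} branch_map_real"
    using x cantor_embed_in_unit by (simp add: mcontinuity_points_def)
qed

lemma analytic_cantor_embed_ill_founded:
  "analytic_set (cantor_embed ` ill_founded_trees)"
  unfolding analytic_set_def
proof (intro exI conjI)
  show "closed ill_founded_witnesses" by (rule closed_ill_founded_witnesses)
  show "continuous_on ill_founded_witnesses (cantor_embed \<circ> evens)"
    using continuous_on_compose[OF continuous_evens continuous_on_subset[OF continuous_cantor_embed]]
    by (rule continuous_on_subset) auto
  show "(cantor_embed \<circ> evens) ` ill_founded_witnesses = cantor_embed ` ill_founded_trees"
    by (simp only: image_comp[symmetric] evens_image_ill_founded_witnesses)
qed

lemma cantor_embed_ill_founded_not_borel:
  "cantor_embed ` ill_founded_trees \<notin> sets borel"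
proof
  assume A: "cantor_embed ` ill_founded_trees \<in> sets borel"
  have "cantor_embed \<in> borel_measurable borel"
    by (rule borel_measurable_continuous_onI[OF continuous_cantor_embed])
  from measurable_sets[OF this A] have "cantor_embed -` (cantor_embed ` ill_founded_trees) \<in> sets borel" by simp
  moreover have "cantor_space \<in> sets borel"
    using closed_cantor_space by (rule borel_closed)
  ultimately have "cantor_embed -` (cantor_embed ` ill_founded_trees) \<inter> cantor_space \<in> sets borel"
    by auto
  moreover have "cantor_embed -` (cantor_embed ` ill_founded_trees) \<inter> cantor_space = ill_founded_trees"
    by (auto simp: inj_on_eq_iff[OF inj_on_cantor_embed])
  ultimately show False using ill_founded_not_borel by simp
qed

section \<open>Borel graph of the multi-valued function on the unit interval\<close>

definition graph_codes :: "(nat \<Rightarrow> nat) set" where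
  "graph_codes = {u. (\<forall>i. u i \<in> {0,1}) \<and>
     (\<forall>k. \<exists>j. u (prod_encode (k,j)) = 1 \<and> (\<forall>j'. u (prod_encode (k,j')) = 1 \<longrightarrow> j' = j))}"

definition graph_decode :: "(nat \<Rightarrow> nat) \<Rightarrow> nat \<Rightarrow> nat" where
  "graph_decode u = (\<lambda>k. LEAST j. u (prod_encode (k,j)) = 1)"

lemma graph_indicator_in_graph_codes: "graph_indicator y \<in> graph_codes"
proof -
  have "\<forall>i. graph_indicator y i \<in> {0,1}" using graph_indicator_in_cantor
    by (simp add: cantor_space_def)
  moreover have "\<exists>j. graph_indicator y (prod_encode (k,j)) = 1 \<and>
      (\<forall>j'. graph_indicator y (prod_encode (k,j')) = 1 \<longrightarrow> j' = j)" for k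
    by (rule exI[of _ "y k"]) (simp add: graph_indicator_pair)
  ultimately show ?thesis unfolding graph_codes_def by blast
qed

lemma graph_decode_indicator: "graph_decode (graph_indicator y) = y"
proof
  fix k show "graph_decode (graph_indicator y) k = y k"
    unfolding graph_decode_def
      by (rule Least_equality) (auto simp: graph_indicator_pair split: if_splits)
qed

lemma graph_indicator_decode:
  assumes u: "u \<in> graph_codes" shows "graph_indicator (graph_decode u) = u"
proof
  fix i
  obtain k j where kj: "prod_decode i = (k, j)" by (cases "prod_decode i")
  have i: "i = prod_encode (k, j)" using prod_decode_inverse[of i] kj by simp
  have ex: "\<exists>jk. u (prod_encode (k, jk)) = 1 \<and> (\<forall>j'. u (prod_encode (k,j')) = 1 \<longrightarrow> j' = jk)"
    using u by (simp add: graph_codes_def)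
  then obtain jk where jk: "u (prod_encode (k, jk)) = 1" "\<forall>j'. u (prod_encode (k,j')) = 1 \<longrightarrow> j' = jk"
    by (elim exE conjE)
  have p: "graph_decode u k = jk" unfolding graph_decode_def
  proof (rule Least_equality)
    show "u (prod_encode (k, jk)) = 1" by (rule jk(1))
    fix y assume "u (prod_encode (k, y)) = 1"
    then have "y = jk" using jk(2) by blast
    then show "jk \<le> y" by simp
  qed
  have u01: "u i \<in> {0,1}" using u by (simp add: graph_codes_def)
  show "graph_indicator (graph_decode u) i = u i"
  proof (cases "j = jk")
    case True then show ?thesis using i jk(1) p by (simp add: graph_indicator_pair)
  next
    case False
    then have "u (prod_encode (k, j)) \<noteq> 1" using jk(2) by metis
    then have "u i \<noteq> 1" using i by simp
    then show ?thesis using False i p u01 by (auto simp: graph_indicator_pair)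
  qed
qed

lemma image_graph_indicator_iff: "u \<in> graph_indicator ` A \<longleftrightarrow> u \<in> graph_codes \<and> graph_decode u \<in> A"
proof
  assume "u \<in> graph_indicator ` A" then show "u \<in> graph_codes \<and> graph_decode u \<in> A"
    using graph_indicator_in_graph_codes graph_decode_indicator by auto
next
  assume a: "u \<in> graph_codes \<and> graph_decode u \<in> A"
  then have "u = graph_indicator (graph_decode u)" using graph_indicator_decode by simp
  then show "u \<in> graph_indicator ` A" using a by blast
qed

definition coded_graph :: "(nat \<Rightarrow> nat) set" where
  "coded_graph = {z. evens z \<in> cantor_space \<and> odds z \<in> graph_indicator ` branch_map (evens z)}"

definition decode_odds :: "(nat \<Rightarrow> nat) \<Rightarrow> nat \<Rightarrow> nat" where
  "decode_odds z = interleave (evens z) (graph_decode (odds z))"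

lemma coded_graph_eq: "coded_graph = {z. odds z \<in> graph_codes} \<inter> decode_odds -` interleaved_graph"
  by (auto simp: coded_graph_def interleaved_graph_def decode_odds_def image_graph_indicator_iff)

lemma borel_odds_pred: "{z. Q (odds z c)} \<in> sets borel"
  by (rule borel_closed, rule locally_constant_clopen(1), rule locally_constant_odds)

lemma borel_odds_graph_codes: "{z. odds z \<in> graph_codes} \<in> sets borel"
proof -
  have eq: "{z. odds z \<in> graph_codes} = (\<Inter>i. {z. odds z i \<in> {0,1}}) \<inter>
     (\<Inter>k. \<Union>j. ({z. odds z (prod_encode (k,j)) = 1} \<inter> (\<Inter>j'. {z. odds z (prod_encode (k,j')) = 1 \<longrightarrow> j' = j})))"
    by (auto simp: graph_codes_def)
  have a: "(\<Inter>i. {z. odds z i \<in> {0,1}}) \<in> sets borel"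
    by (rule sets.countable_INT) (auto intro: borel_odds_pred)
  have b: "(\<Inter>j'. {z. odds z (prod_encode (k,j')) = 1 \<longrightarrow> j' = j}) \<in> sets borel" for k j
    by (rule sets.countable_INT) (auto intro: borel_odds_pred)
  have c: "(\<Union>j. ({z. odds z (prod_encode (k,j)) = 1} \<inter> (\<Inter>j'. {z. odds z (prod_encode (k,j')) = 1 \<longrightarrow> j' = j}))) \<in> sets borel" for k
    by (rule sets.countable_UN) (auto intro!: sets.Int borel_odds_pred b)
  have d: "(\<Inter>k. \<Union>j. ({z. odds z (prod_encode (k,j)) = 1} \<inter> (\<Inter>j'. {z. odds z (prod_encode (k,j')) = 1 \<longrightarrow> j' = j}))) \<in> sets borel"
  proof (rule sets.countable_INT)
    show "(\<lambda>k. \<Union>j. ({z. odds z (prod_encode (k,j)) = 1} \<inter> (\<Inter>j'. {z. odds z (prod_encode (k,j')) = 1 \<longrightarrow> j' = j}))) ` UNIV \<subseteq> sets borel"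
      using c by (simp only: image_subset_iff) blast
  qed simp
  show ?thesis unfolding eq using a d by (rule sets.Int)
qed

lemma measurable_count_space_borel_nat:
  "f \<in> measurable M (count_space UNIV) \<Longrightarrow> f \<in> measurable M (borel :: nat measure)"
proof -
  assume f: "f \<in> measurable M (count_space UNIV)"
  have "sets (borel :: nat measure) = sets (count_space UNIV)"
    by (simp add: sets_borel_eq_count_space)
  then show ?thesis using f measurable_cong_sets by blast
qed

lemma decode_odds_measurable: "decode_odds \<in> borel_measurable borel"
proof (rule measurable_coordinatewise_then_product)
  fix i
  show "(\<lambda>z. decode_odds z i) \<in> borel_measurable borel"
  proof (cases "even i")
    case True
    have "(\<lambda>z::nat\<Rightarrow>nat. z (2 * (i div 2))) \<in> borel_measurable borel"
      by (rule borel_measurable_continuous_onI) (rule continuous_on_product_coordinates)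
    then show ?thesis using True by (simp add: decode_odds_def interleave_def evens_def)
  next
    case False
    have p: "Measurable.pred borel (\<lambda>z::nat\<Rightarrow>nat. z m = 1)" for m
    proof -
      have "closed {z::nat\<Rightarrow>nat. z m = 1}"
        by (rule locally_constant_clopen(1)) (rule exI[of _ "Suc m"], simp add: cylinder_def)
      then show ?thesis unfolding pred_def by (simp add: borel_closed)
    qed
    have "(\<lambda>z::nat\<Rightarrow>nat. LEAST j. z (2 * prod_encode (i div 2, j) + 1) = 1) \<in> measurable borel (count_space UNIV)"
      by (rule measurable_Least) (rule p)
    then have "(\<lambda>z::nat\<Rightarrow>nat. LEAST j. z (2 * prod_encode (i div 2, j) + 1) = 1) \<in> borel_measurable borel"
      by (rule measurable_count_space_borel_nat)
    then show ?thesis using False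
      by (simp add: decode_odds_def interleave_def odds_def graph_decode_def)
  qed
qed

lemma borel_coded_graph: "coded_graph \<in> sets borel"
proof -
  from measurable_sets[OF decode_odds_measurable borel_interleaved_graph]
  have "decode_odds -` interleaved_graph \<in> sets borel" by simp
  then show ?thesis unfolding coded_graph_eq using borel_odds_graph_codes by auto
qed

definition decode_pair :: "real \<times> real \<Rightarrow> nat \<Rightarrow> nat" where
  "decode_pair p = interleave (cantor_decode (fst p)) (cantor_decode (snd p))"

lemma cantor_decode_coordinate_measurable: "(\<lambda>r. cantor_decode r j) \<in> borel_measurable borel"
  using measurable_compose[OF cantor_decode_measurable
      borel_measurable_continuous_onI[OF continuous_on_product_coordinates[of j]]]
  by simp

lemma decode_pair_measurable: "decode_pair \<in> borel_measurable borel"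
proof (rule measurable_coordinatewise_then_product)
  fix i
  have f: "(fst :: real \<times> real \<Rightarrow> real) \<in> borel_measurable borel"
    by (rule borel_measurable_continuous_onI) (intro continuous_intros)
  have s: "(snd :: real \<times> real \<Rightarrow> real) \<in> borel_measurable borel"
    by (rule borel_measurable_continuous_onI) (intro continuous_intros)
  have 1: "(\<lambda>p. cantor_decode (fst p) j) \<in> borel_measurable (borel :: (real \<times> real) measure)" for j
    using measurable_compose[OF f cantor_decode_coordinate_measurable] by simp
  have 2: "(\<lambda>p. cantor_decode (snd p) j) \<in> borel_measurable (borel :: (real \<times> real) measure)" for j
    using measurable_compose[OF s cantor_decode_coordinate_measurable] by simp
  show "(\<lambda>p. decode_pair p i) \<in> borel_measurable borel"
    by (cases "even i") (simp_all add: decode_pair_def interleave_def 1 2)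
qed

definition graph_on_cantor_image :: "(real \<times> real) set" where
  "graph_on_cantor_image = {p. fst p \<in> cantor_image} \<inter> {p. snd p \<in> cantor_image} \<inter> decode_pair -` coded_graph"

lemma graph_on_cantor_image_iff:
  "(r, w) \<in> graph_on_cantor_image \<longleftrightarrow> r \<in> cantor_image \<and> w \<in> baire_embed ` branch_map (cantor_decode r)"
proof
  assume a: "(r, w) \<in> graph_on_cantor_image"
  then have r: "r \<in> cantor_image" and w: "w \<in> cantor_image"
    and h: "cantor_decode w \<in> graph_indicator ` branch_map (cantor_decode r)"
    by (auto simp: graph_on_cantor_image_def decode_pair_def coded_graph_def)
  from w obtain u where u: "u \<in> cantor_space" "w = cantor_embed u" by (auto simp: cantor_image_def)
  then have "cantor_decode w = u" using cantor_decode_embed by simp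
  with h obtain y where y: "y \<in> branch_map (cantor_decode r)" "u = graph_indicator y" by auto
  then have "w = baire_embed y" using u by (simp add: baire_embed_def)
  with r y show "r \<in> cantor_image \<and> w \<in> baire_embed ` branch_map (cantor_decode r)" by blast
next
  assume a: "r \<in> cantor_image \<and> w \<in> baire_embed ` branch_map (cantor_decode r)"
  then obtain y where y: "y \<in> branch_map (cantor_decode r)" "w = baire_embed y" by blast
  have "cantor_decode w = graph_indicator y"
    using y(2) cantor_decode_embed[OF graph_indicator_in_cantor] by (simp add: baire_embed_def)
  then show "(r, w) \<in> graph_on_cantor_image"
    using a y baire_embed_in_cantor_image cantor_decode_in_cantor
      by (auto simp: graph_on_cantor_image_def decode_pair_def coded_graph_def)
qed

lemma borel_cantor_image: "cantor_image \<in> sets borel" by (rule borel_closed[OF closed_cantor_image])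

lemma borel_graph_on_cantor_image: "graph_on_cantor_image \<in> sets borel"
proof -
  have f: "(fst :: real \<times> real \<Rightarrow> real) \<in> borel_measurable borel"
    by (rule borel_measurable_continuous_onI) (intro continuous_intros)
  have s: "(snd :: real \<times> real \<Rightarrow> real) \<in> borel_measurable borel"
    by (rule borel_measurable_continuous_onI) (intro continuous_intros)
  have 1: "{p. fst p \<in> cantor_image} \<in> sets (borel :: (real \<times> real) measure)"
    using measurable_sets[OF f borel_cantor_image] by (simp add: vimage_def)
  have 2: "{p. snd p \<in> cantor_image} \<in> sets (borel :: (real \<times> real) measure)"
    using measurable_sets[OF s borel_cantor_image] by (simp add: vimage_def)
  have 3: "decode_pair -` coded_graph \<in> sets borel"
    using measurable_sets[OF decode_pair_measurable borel_coded_graph] by simp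
  show ?thesis unfolding graph_on_cantor_image_def using 1 2 3 by auto
qed

lemma borel_Rats: "(\<rat> :: real set) \<in> sets borel"
  by (rule sets.countable) (auto simp: countable_rat)

lemma gap_dist_measurable[measurable]: "gap_dist \<in> borel_measurable borel"
  by (rule borel_measurable_continuous_onI[OF continuous_gap_dist])

definition graph_off_cantor_image :: "(real \<times> real) set" where
  "graph_off_cantor_image = {p. fst p \<in> {0..1} \<and> fst p \<notin> cantor_image \<and> snd p \<in> {0..1} \<and>
     ((fst p \<in> \<rat> \<and> sin (pi * snd p / gap_dist (fst p)) \<le> -1/2) \<or> (fst p \<notin> \<rat> \<and> 1/2 \<le> sin (pi * snd p / gap_dist (fst p))))}"

lemma borel_graph_off_cantor_image: "graph_off_cantor_image \<in> sets borel"
proof -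
  note [measurable] = borel_cantor_image borel_Rats
  have "{p \<in> space (borel \<Otimes>\<^sub>M borel). fst p \<in> {0..1::real} \<and> fst p \<notin> cantor_image \<and> snd p \<in> {0..1::real} \<and>
     ((fst p \<in> \<rat> \<and> sin (pi * snd p / gap_dist (fst p)) \<le> -1/2) \<or> (fst p \<notin> \<rat> \<and> 1/2 \<le> sin (pi * snd p / gap_dist (fst p))))}
     \<in> sets (borel \<Otimes>\<^sub>M borel)"
    by measurable
  moreover have "sets (borel \<Otimes>\<^sub>M borel) = sets (borel :: (real \<times> real) measure)"
    by (simp only: borel_prod)
  ultimately show ?thesis by (simp add: graph_off_cantor_image_def space_pair_measure)
qed

lemma mgraph_branch_map_real:
  "mgraph {0..1} branch_map_real = graph_on_cantor_image \<union> graph_off_cantor_image"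
proof (intro set_eqI iffI)
  fix p assume "p \<in> mgraph {0..1} branch_map_real"
  then obtain r w where p: "p = (r, w)" "r \<in> {0..1}" "w \<in> branch_map_real r"
    by (auto simp: mgraph_def)
  show "p \<in> graph_on_cantor_image \<union> graph_off_cantor_image"
  proof (cases "r \<in> cantor_image")
    case True then show ?thesis using p graph_on_cantor_image_iff by (simp add: branch_map_real_def)
  next
    case False then show ?thesis using p
      by (auto simp: branch_map_real_def graph_off_cantor_image_def split: if_splits)
  qed
next
  fix p assume "p \<in> graph_on_cantor_image \<union> graph_off_cantor_image"
  then show "p \<in> mgraph {0..1} branch_map_real"
  proof
    assume "p \<in> graph_on_cantor_image"
    then obtain r w where rw: "p = (r, w)" "r \<in> cantor_image"
        "w \<in> baire_embed ` branch_map (cantor_decode r)"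
      using graph_on_cantor_image_iff by (cases p) auto
    have "r \<in> {0..1}" using cantor_image_bounds[OF rw(2)] by auto
    then show ?thesis using rw by (auto simp: mgraph_def branch_map_real_def)
  next
    assume "p \<in> graph_off_cantor_image"
    then show ?thesis by (auto simp: mgraph_def branch_map_real_def graph_off_cantor_image_def)
  qed
qed

theorem ex_multifun_unit_interval:
  "\<exists>F :: real \<Rightarrow> real set.
            multifun_on {0..1} {0..1} F
          \<and> mgraph {0..1} F \<in> sets borel
          \<and> analytic_set (mcontinuity_points dist dist {0..1} F)
          \<and> mcontinuity_points dist dist {0..1} F \<notin> sets borel"
proof (intro exI[of _ branch_map_real] conjI)
  show "multifun_on {0..1} {0..1} branch_map_real"
    using branch_map_real_nonempty branch_map_real_subset by (simp add: multifun_on_def)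
  show "mgraph {0..1} branch_map_real \<in> sets borel" unfolding mgraph_branch_map_real
    using borel_graph_on_cantor_image borel_graph_off_cantor_image by auto
  show "analytic_set (mcontinuity_points dist dist {0..1} branch_map_real)"
    unfolding mcontinuity_points_branch_map_real by (rule analytic_cantor_embed_ill_founded)
  show "mcontinuity_points dist dist {0..1} branch_map_real \<notin> sets borel"
    unfolding mcontinuity_points_branch_map_real by (rule cantor_embed_ill_founded_not_borel)
qed

theorem theorem2p9:
  shows "(\<exists>F :: (nat \<Rightarrow> nat) \<Rightarrow> (nat \<Rightarrow> nat) set.
            multifun_on cantor_space UNIV F
          \<and> (\<forall>x\<in>cantor_space. closed (F x))
          \<and> mgraph cantor_space F \<in> sets borel
          \<and> analytic_set (mcontinuity_points baire_dist baire_dist cantor_space F)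
          \<and> mcontinuity_points baire_dist baire_dist cantor_space F \<notin> sets borel)
       \<and> (\<exists>F :: real \<Rightarrow> real set.
            multifun_on {0..1} {0..1} F
          \<and> mgraph {0..1} F \<in> sets borel
          \<and> analytic_set (mcontinuity_points dist dist {0..1} F)
          \<and> mcontinuity_points dist dist {0..1} F \<notin> sets borel)"
  using ex_multifun_cantor_baire ex_multifun_unit_interval by blast

end
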